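(* Let $\Delta:=\{s\in\mathbb{C}^k:\Delta(s)=0\}$ be the discriminant hypersurface; on $\mathbb{C}^k\setminus\Delta$ the matrix $P'_s(A(s))$ is invertible. Consider the system, for $\mathbb{C}^k$-valued holomorphic $\Psi$ on an open subset of $\mathbb{C}^k\setminus\Delta$, $$(-1)^{k+h}\frac{\partial\Psi}{\partial s_h}(s)=\frac{\partial(A(s)^{k-h}\Psi)}{\partial s_k}(s)+(-1)^k(k-h)A(s)^{k-h-1}P'_s(A(s))^{-1}\Psi(s)\qquad\forall h\in[1,k-1],\qquad(@@)$$ and the system $$(-1)^{k+h}\frac{\partial\Phi}{\partial s_h}(s)=\frac{\partial(A(s)^{k-h}\Phi)}{\partial s_k}(s)\qquad\forall h\in[1,k-1].\qquad(@)$$ Then: (1) for every entire function $f$, the holomorphic function $\Psi_f$ satisfies $(@@)$ on $\mathbb{C}^k\setminus\Delta$; (2) if $\Psi$ is a solution of $(@@)$, then $A(s)\Psi$ is also a solution of $(@@)$; (3) if $\Phi$ is a solution of $(@)$, then $\Psi:=P'_s(A(s))\Phi$ is a solution of $(@@)$; (4) if $\Psi$ is a solution of $(@@)$ on $\mathbb{C}^k\setminus\Delta$, then $\Phi:=P'_s(A(s))^{-1}\Psi$ is a solution of $(@)$ on $\mathbb{C}^k\setminus\Delta$.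
   Context: Fix an integer $k\ge 2$. Use coordinates $s=(s_1,\dots,s_k)$, set $s_0:=1$, $P_s(z):=\sum_{h=0}^k(-1)^hs_hz^{k-h}$, $P'_s(z):=\partial_zP_s(z)=\sum_{h=0}^{k-1}(-1)^h(k-h)s_hz^{k-h-1}$, $E(z):=(1,z,\dots,z^{k-1})^T$. $A(s)$ is the $(k,k)$ companion matrix with $A_{i,i+1}=1$ for $i\in[1,k-1]$, last row $A_{k,j}=(-1)^{k-j}s_{k+1-j}$ for $j\in[1,k]$, all other entries $0$; $P'_s(A(s)):=\sum_{h=0}^{k-1}(-1)^h(k-h)s_hA(s)^{k-h-1}$. For an entire $f$, $\Psi_f(s):=\frac{1}{2i\pi}\int_{|\zeta|=R}\frac{f(\zeta)E(\zeta)P'_s(\zeta)\,d\zeta}{P_s(\zeta)}$, with $R$ large enough that all roots of $P_s$ lie in $\{|\zeta|<R\}$. The discriminant $\Delta(s)$ is the polynomial in $s$ corresponding to $\prod_{i<j}(z_i-z_j)^2$, $z_1,\dots,z_k$ the roots of $P_s$. *)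

theory Defs
  imports "HOL-Complex_Analysis.Complex_Analysis" "HOL-Computational_Algebra.Polynomial"
begin

text \<open>Points of C^k are represented as functions nat => complex that vanish outside
  the index range 1..k (coordinates s_1,...,s_k).  The space nat => complex carries the
  product topology, so the subspace topology on Ck k is the usual topology of C^k.
  Vectors of C^k and k x k matrices are represented as nat-indexed functions, only the
  indices 1..k being relevant.\<close>

definition Ck :: "nat \<Rightarrow> (nat \<Rightarrow> complex) set" where
  "Ck k = {s. \<forall>i. i \<notin> {1..k} \<longrightarrow> s i = 0}"

definition scoef :: "(nat \<Rightarrow> complex) \<Rightarrow> nat \<Rightarrow> complex" where
  "scoef s h = (if h = 0 then 1 else s h)"

definition Ppoly :: "nat \<Rightarrow> (nat \<Rightarrow> complex) \<Rightarrow> complex poly" where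
  "Ppoly k s = (\<Sum>h\<le>k. monom ((-1)^h * scoef s h) (k - h))"

definition Pder :: "nat \<Rightarrow> (nat \<Rightarrow> complex) \<Rightarrow> complex \<Rightarrow> complex" where
  "Pder k s z = (\<Sum>h<k. (-1)^h * of_nat (k - h) * scoef s h * z ^ (k - h - 1))"

definition mmul :: "nat \<Rightarrow> (nat \<Rightarrow> nat \<Rightarrow> complex) \<Rightarrow> (nat \<Rightarrow> nat \<Rightarrow> complex) \<Rightarrow> nat \<Rightarrow> nat \<Rightarrow> complex" where
  "mmul k M N i j = (\<Sum>l=1..k. M i l * N l j)"

definition mid :: "nat \<Rightarrow> nat \<Rightarrow> complex" where
  "mid i j = (if i = j then 1 else 0)"

fun mpow :: "nat \<Rightarrow> (nat \<Rightarrow> nat \<Rightarrow> complex) \<Rightarrow> nat \<Rightarrow> nat \<Rightarrow> nat \<Rightarrow> complex" where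
  "mpow k M 0 = mid"
| "mpow k M (Suc n) = mmul k M (mpow k M n)"

definition mvec :: "nat \<Rightarrow> (nat \<Rightarrow> nat \<Rightarrow> complex) \<Rightarrow> (nat \<Rightarrow> complex) \<Rightarrow> nat \<Rightarrow> complex" where
  "mvec k M v i = (\<Sum>l=1..k. M i l * v l)"

definition is_minv :: "nat \<Rightarrow> (nat \<Rightarrow> nat \<Rightarrow> complex) \<Rightarrow> (nat \<Rightarrow> nat \<Rightarrow> complex) \<Rightarrow> bool" where
  "is_minv k M B \<longleftrightarrow> (\<forall>i\<in>{1..k}. \<forall>j\<in>{1..k}. mmul k M B i j = mid i j \<and> mmul k B M i j = mid i j)"

definition minvertible :: "nat \<Rightarrow> (nat \<Rightarrow> nat \<Rightarrow> complex) \<Rightarrow> bool" where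
  "minvertible k M \<longleftrightarrow> (\<exists>B. is_minv k M B)"

definition minv :: "nat \<Rightarrow> (nat \<Rightarrow> nat \<Rightarrow> complex) \<Rightarrow> nat \<Rightarrow> nat \<Rightarrow> complex" where
  "minv k M = (SOME B. is_minv k M B)"

definition Acomp :: "nat \<Rightarrow> (nat \<Rightarrow> complex) \<Rightarrow> nat \<Rightarrow> nat \<Rightarrow> complex" where
  "Acomp k s i j =
     (if 1 \<le> i \<and> i \<le> k - 1 \<and> j = i + 1 then 1
      else if i = k \<and> 1 \<le> j \<and> j \<le> k then (-1) ^ (k - j) * s (k + 1 - j)
      else 0)"

definition PderA :: "nat \<Rightarrow> (nat \<Rightarrow> complex) \<Rightarrow> nat \<Rightarrow> nat \<Rightarrow> complex" where
  "PderA k s i j = (\<Sum>h<k. (-1)^h * of_nat (k - h) * scoef s h * mpow k (Acomp k s) (k - h - 1) i j)"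

text \<open>Discriminant: prod_{i<j} (z_i - z_j)^2 over the roots z_1..z_k of P_s
  (listed with multiplicity; the value does not depend on the ordering).\<close>
definition discr :: "nat \<Rightarrow> (nat \<Rightarrow> complex) \<Rightarrow> complex" where
  "discr k s = (THE d. \<exists>zs. length zs = k \<and> Ppoly k s = (\<Prod>z\<leftarrow>zs. [:-z, 1:]) \<and>
       d = (\<Prod>(i, j)\<in>{(i, j). i < j \<and> j < k}. (zs ! i - zs ! j) ^ 2))"

definition DiscSet :: "nat \<Rightarrow> (nat \<Rightarrow> complex) set" where
  "DiscSet k = {s \<in> Ck k. discr k s = 0}"

definition pdiff :: "nat \<Rightarrow> ((nat \<Rightarrow> complex) \<Rightarrow> complex) \<Rightarrow> (nat \<Rightarrow> complex) \<Rightarrow> complex" where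
  "pdiff j F s = deriv (\<lambda>t. F (s(j := t))) (s j)"

text \<open>Holomorphy on an open subset U of C^k: continuous and holomorphic in each
  variable separately (equivalent to holomorphy by Osgood's lemma).\<close>
definition holo_k :: "nat \<Rightarrow> (nat \<Rightarrow> complex) set \<Rightarrow> ((nat \<Rightarrow> complex) \<Rightarrow> complex) \<Rightarrow> bool" where
  "holo_k k U F \<longleftrightarrow> continuous_on U F \<and>
     (\<forall>s\<in>U. \<forall>j\<in>{1..k}. (\<lambda>t. F (s(j := t))) field_differentiable (at (s j)))"

definition admissible :: "nat \<Rightarrow> (nat \<Rightarrow> complex) set \<Rightarrow> bool" where
  "admissible k U \<longleftrightarrow> U \<subseteq> Ck k - DiscSet k \<and> openin (top_of_set (Ck k)) U"

definition sol_AA :: "nat \<Rightarrow> (nat \<Rightarrow> complex) set \<Rightarrow> ((nat \<Rightarrow> complex) \<Rightarrow> nat \<Rightarrow> complex) \<Rightarrow> bool" where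
  "sol_AA k U Psi \<longleftrightarrow> admissible k U \<and> (\<forall>i\<in>{1..k}. holo_k k U (\<lambda>s. Psi s i)) \<and>
     (\<forall>s\<in>U. \<forall>h\<in>{1..k-1}. \<forall>i\<in>{1..k}.
        (-1) ^ (k + h) * pdiff h (\<lambda>t. Psi t i) s =
          pdiff k (\<lambda>t. mvec k (mpow k (Acomp k t) (k - h)) (Psi t) i) s
          + (-1) ^ k * of_nat (k - h) *
            mvec k (mmul k (mpow k (Acomp k s) (k - h - 1)) (minv k (PderA k s))) (Psi s) i)"

definition sol_A :: "nat \<Rightarrow> (nat \<Rightarrow> complex) set \<Rightarrow> ((nat \<Rightarrow> complex) \<Rightarrow> nat \<Rightarrow> complex) \<Rightarrow> bool" where
  "sol_A k U Phi \<longleftrightarrow> admissible k U \<and> (\<forall>i\<in>{1..k}. holo_k k U (\<lambda>s. Phi s i)) \<and>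
     (\<forall>s\<in>U. \<forall>h\<in>{1..k-1}. \<forall>i\<in>{1..k}.
        (-1) ^ (k + h) * pdiff h (\<lambda>t. Phi t i) s =
          pdiff k (\<lambda>t. mvec k (mpow k (Acomp k t) (k - h)) (Phi t) i) s)"

text \<open>Psi_f(s), component i (i = 1..k), E(z)_i = z^(i-1); the circle radius R is any
  radius exceeding the moduli of all roots of P_s.\<close>
definition PsiF :: "nat \<Rightarrow> (complex \<Rightarrow> complex) \<Rightarrow> (nat \<Rightarrow> complex) \<Rightarrow> nat \<Rightarrow> complex" where
  "PsiF k f s i =
     contour_integral
       (circlepath 0 (SOME R. R > 0 \<and> (\<forall>z. poly (Ppoly k s) z = 0 \<longrightarrow> cmod z < R)))
       (\<lambda>\<zeta>. f \<zeta> * \<zeta> ^ (i - 1) * Pder k s \<zeta> / poly (Ppoly k s) \<zeta>) / (2 * pi * \<i>)"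

end

theory Submission
  imports Defs "Jordan_Normal_Form.Determinant" "HOL-Computational_Algebra.Fundamental_Theorem_Algebra"
    "HOL-Computational_Algebra.Field_as_Ring" "HOL-Computational_Algebra.Polynomial_Factorial"
begin

text \<open>The companion matrix \<open>A(s)\<close> acts on \<open>E(z) = (1, z, \<dots>, z\<^sup>k\<^sup>-\<^sup>1)\<close> as multiplication by \<open>z\<close>
  up to a multiple of \<open>P\<^sub>s(z)\<close>, hence \<open>q(A(s)) E(z) \<equiv> q(z) E(z)\<close> modulo \<open>P\<^sub>s(z)\<close> for every
  polynomial \<open>q\<close>. With Cayley--Hamilton and Bezout this shows that \<open>P'\<^sub>s(A(s))\<close> is invertible iff
  \<open>P\<^sub>s\<close> has no multiple root, i.e. iff \<open>\<Delta>(s) \<noteq> 0\<close>.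

  Read (@) as the vanishing of the defect \<open>(-1)\<^sup>k\<^sup>+\<^sup>h \<partial>\<^sub>h\<Phi> - \<partial>\<^sub>k(A\<^sup>k\<^sup>-\<^sup>h \<Phi>)\<close>. Since
  \<open>\<partial>A/\<partial>s\<^sub>h = (-1)\<^sup>h\<^sup>+\<^sup>k (\<partial>A/\<partial>s\<^sub>k) A\<^sup>k\<^sup>-\<^sup>h\<close>, the defect of \<open>A \<Phi>\<close> is \<open>A\<close> times the defect
  of \<open>\<Phi>\<close>, and the defect of \<open>P'\<^sub>s(A) \<Phi>\<close> is \<open>P'\<^sub>s(A)\<close> times the defect of \<open>\<Phi>\<close> plus
  \<open>(-1)\<^sup>k (k - h) A\<^sup>k\<^sup>-\<^sup>h\<^sup>-\<^sup>1 \<Phi>\<close>, which comes from the coefficient \<open>s\<^sub>h\<close> of \<open>P'\<^sub>s\<close> itself.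
  This gives (2)--(4). For (1), \<open>\<Psi>\<^sub>f = P'\<^sub>s(A) \<Phi>\<^sub>f\<close> with \<open>\<Phi>\<^sub>f = (2\<pi>i)\<^sup>-\<^sup>1 \<integral> f E / P\<^sub>s\<close>,
  and \<open>A\<^sup>k\<^sup>-\<^sup>h \<Phi>\<^sub>f\<close> is the same integral with \<open>f\<close> replaced by \<open>z\<^sup>k\<^sup>-\<^sup>h f\<close>. Differentiating
  under the integral sign, both \<open>(-1)\<^sup>k\<^sup>+\<^sup>h \<partial>\<^sub>h\<Phi>\<^sub>f\<close> and \<open>\<partial>\<^sub>k(A\<^sup>k\<^sup>-\<^sup>h \<Phi>\<^sub>f)\<close> become
  \<open>(-1)\<^sup>k\<^sup>+\<^sup>1 (2\<pi>i)\<^sup>-\<^sup>1 \<integral> z\<^sup>k\<^sup>-\<^sup>h f E / P\<^sub>s\<^sup>2\<close>, so \<open>\<Phi>\<^sub>f\<close> solves (@).\<close>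

section \<open>Matrices indexed by \<open>1..k\<close>\<close>

lemma mmul_assoc: "mmul k (mmul k M N) L = mmul k M (mmul k N L)"
  unfolding mmul_def sum_distrib_left sum_distrib_right
  by (intro ext, subst sum.swap) (simp add: mult.assoc)

lemma mvec_mmul: "mvec k (mmul k M N) v = mvec k M (mvec k N v)"
  unfolding mvec_def mmul_def sum_distrib_left sum_distrib_right
  by (intro ext, subst sum.swap) (simp add: mult.assoc)

lemma mmul_cong:
  assumes "\<And>l. l \<in> {1..k} \<Longrightarrow> M i l = M' i l" "\<And>l. l \<in> {1..k} \<Longrightarrow> N l j = N' l j"
  shows "mmul k M N i j = mmul k M' N' i j"
  unfolding mmul_def using assms by (intro sum.cong) auto

lemma mvec_cong:
  assumes "\<And>l. l \<in> {1..k} \<Longrightarrow> M i l = M' i l" "\<And>l. l \<in> {1..k} \<Longrightarrow> v l = v' l"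
  shows "mvec k M v i = mvec k M' v' i"
  unfolding mvec_def using assms by (intro sum.cong) auto

lemma mmul_mid_left:
  assumes "i \<in> {1..k}" shows "mmul k mid M i j = M i j"
proof -
  have "mmul k mid M i j = (\<Sum>l\<in>{1..k}. if l = i then M l j else 0)"
    unfolding mmul_def mid_def by (intro sum.cong) auto
  then show ?thesis using assms by simp
qed

lemma mmul_mid_right:
  assumes "j \<in> {1..k}" shows "mmul k M mid i j = M i j"
proof -
  have "mmul k M mid i j = (\<Sum>l\<in>{1..k}. if l = j then M i l else 0)"
    unfolding mmul_def mid_def by (intro sum.cong) auto
  then show ?thesis using assms by simp
qed

lemma mvec_mid:
  assumes "i \<in> {1..k}" shows "mvec k mid v i = v i"
proof -
  have "mvec k mid v i = (\<Sum>l\<in>{1..k}. if l = i then v l else 0)"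
    unfolding mvec_def mid_def by (intro sum.cong) auto
  then show ?thesis using assms by simp
qed

lemma mmul_sum_left: "mmul k (\<lambda>i j. \<Sum>m\<in>S. c m * X m i j) N i j = (\<Sum>m\<in>S. c m * mmul k (X m) N i j)"
  unfolding mmul_def sum_distrib_right sum_distrib_left
  by (subst sum.swap) (simp add: mult.assoc)

lemma mmul_sum_right: "mmul k N (\<lambda>i j. \<Sum>m\<in>S. c m * X m i j) i j = (\<Sum>m\<in>S. c m * mmul k N (X m) i j)"
  unfolding mmul_def sum_distrib_right sum_distrib_left
  by (subst sum.swap) (simp add: mult.assoc mult.left_commute)

lemma mmul_add_left: "mmul k (\<lambda>i j. X i j + Y i j) N i j = mmul k X N i j + mmul k Y N i j"
  unfolding mmul_def by (simp add: algebra_simps sum.distrib)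

lemma mmul_scale_left: "mmul k (\<lambda>i j. c * X i j) N i j = c * mmul k X N i j"
  unfolding mmul_def by (simp add: algebra_simps sum_distrib_left)

lemma mmul_scale_right: "mmul k M (\<lambda>i j. c * X i j) i j = c * mmul k M X i j"
  unfolding mmul_def by (simp add: sum_distrib_left mult_ac)

lemma mvec_add_left: "mvec k (\<lambda>i j. M i j + N i j) v i = mvec k M v i + mvec k N v i"
  unfolding mvec_def by (simp add: sum.distrib algebra_simps)

lemma mvec_diff_left: "mvec k (\<lambda>i j. M i j - N i j) v i = mvec k M v i - mvec k N v i"
  unfolding mvec_def by (simp add: sum_subtractf algebra_simps)

lemma mvec_scale_left: "mvec k (\<lambda>i j. c * M i j) v i = c * mvec k M v i"
  unfolding mvec_def by (simp add: sum_distrib_left mult_ac)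

lemma mvec_diff_right: "mvec k M (\<lambda>l. u l - w l) i = mvec k M u i - mvec k M w i"
  unfolding mvec_def by (simp add: sum_subtractf algebra_simps)

lemma mvec_scale_right: "mvec k M (\<lambda>l. c * v l) i = c * mvec k M v i"
  unfolding mvec_def by (simp add: sum_distrib_left mult_ac)

lemma mvec_divide_right: "mvec k M (\<lambda>l. v l / c) i = mvec k M v i / c"
  unfolding mvec_def by (simp add: sum_divide_distrib)

lemma mvec_eq_0I: "(\<And>l. l \<in> {1..k} \<Longrightarrow> v l = 0) \<Longrightarrow> mvec k M v i = 0"
  unfolding mvec_def by simp

lemma mpow_add: "i \<in> {1..k} \<Longrightarrow> mmul k (mpow k M a) (mpow k M b) i j = mpow k M (a + b) i j"
proof (induction a arbitrary: i)
  case 0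
  then show ?case by (simp add: mmul_mid_left)
next
  case (Suc a)
  have "mmul k (mpow k M (Suc a)) (mpow k M b) i j = mmul k M (mmul k (mpow k M a) (mpow k M b)) i j"
    by (simp add: mmul_assoc)
  also have "\<dots> = mmul k M (mpow k M (a + b)) i j"
    by (rule mmul_cong) (use Suc.IH in auto)
  finally show ?case by simp
qed

lemma mpow_commute: "i \<in> {1..k} \<Longrightarrow> mmul k (mpow k M a) (mpow k M b) i j = mmul k (mpow k M b) (mpow k M a) i j"
  by (simp add: mpow_add add.commute)

lemma mpow_1: "j \<in> {1..k} \<Longrightarrow> mpow k M 1 i j = M i j"
  by (simp add: mmul_mid_right)

lemma mpow_commute_base:
  assumes "i \<in> {1..k}" "j \<in> {1..k}"
  shows "mmul k M (mpow k M n) i j = mmul k (mpow k M n) M i j"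
proof -
  have "mmul k M (mpow k M n) i j = mmul k (mpow k M 1) (mpow k M n) i j"
    using mpow_1 by (intro mmul_cong) auto
  also have "\<dots> = mmul k (mpow k M n) (mpow k M 1) i j" by (rule mpow_commute[OF assms(1)])
  also have "\<dots> = mmul k (mpow k M n) M i j" using mpow_1 assms(2) by (intro mmul_cong) auto
  finally show ?thesis .
qed

lemma is_minv_minv: "minvertible k M \<Longrightarrow> is_minv k M (minv k M)"
  by (metis minvertible_def minv_def someI_ex)

lemma is_minv_unique:
  assumes "is_minv k M C" "is_minv k M C'" "i \<in> {1..k}" "j \<in> {1..k}"
  shows "C i j = C' i j"
proof -
  have "C i j = mmul k C mid i j" using assms by (simp add: mmul_mid_right)
  also have "\<dots> = mmul k C (mmul k M C') i j"
    by (rule mmul_cong) (use assms in \<open>auto simp: is_minv_def\<close>)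
  also have "\<dots> = mmul k (mmul k C M) C' i j" by (simp add: mmul_assoc)
  also have "\<dots> = mmul k mid C' i j"
    by (rule mmul_cong) (use assms in \<open>auto simp: is_minv_def\<close>)
  also have "\<dots> = C' i j" using assms by (simp add: mmul_mid_left)
  finally show ?thesis .
qed

lemma mvec_minv_cancel_left:
  assumes "minvertible k M" "i \<in> {1..k}"
  shows "mvec k (minv k M) (mvec k M v) i = v i"
proof -
  have "mvec k (minv k M) (mvec k M v) i = mvec k mid v i"
    unfolding mvec_mmul[symmetric]
    by (rule mvec_cong) (use is_minv_minv[OF assms(1)] assms(2) in \<open>auto simp: is_minv_def\<close>)
  then show ?thesis using assms(2) by (simp add: mvec_mid)
qed

lemma mvec_minv_cancel_right:
  assumes "minvertible k M" "i \<in> {1..k}"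
  shows "mvec k M (mvec k (minv k M) v) i = v i"
proof -
  have "mvec k M (mvec k (minv k M) v) i = mvec k mid v i"
    unfolding mvec_mmul[symmetric]
    by (rule mvec_cong) (use is_minv_minv[OF assms(1)] assms(2) in \<open>auto simp: is_minv_def\<close>)
  then show ?thesis using assms(2) by (simp add: mvec_mid)
qed

lemma minv_commute:
  assumes "minvertible k M"
    and comm: "\<And>i j. i \<in> {1..k} \<Longrightarrow> j \<in> {1..k} \<Longrightarrow> mmul k M N i j = mmul k N M i j"
    and "i \<in> {1..k}" "j \<in> {1..k}"
  shows "mmul k (minv k M) N i j = mmul k N (minv k M) i j"
proof -
  let ?C = "minv k M"
  have MC: "mmul k M ?C a b = mid a b" and CM: "mmul k ?C M a b = mid a b"
    if "a \<in> {1..k}" "b \<in> {1..k}" for a b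
    using is_minv_minv[OF assms(1)] that by (auto simp: is_minv_def)
  have "mmul k ?C N i j = mmul k (mmul k ?C N) mid i j" using assms(4) by (simp add: mmul_mid_right)
  also have "\<dots> = mmul k (mmul k ?C N) (mmul k M ?C) i j"
    by (rule mmul_cong) (use assms(4) MC in auto)
  also have "\<dots> = mmul k ?C (mmul k (mmul k N M) ?C) i j" by (simp add: mmul_assoc)
  also have "\<dots> = mmul k ?C (mmul k (mmul k M N) ?C) i j"
    by (rule mmul_cong[OF refl], rule mmul_cong) (use comm in auto)
  also have "\<dots> = mmul k (mmul k ?C M) (mmul k N ?C) i j" by (simp add: mmul_assoc)
  also have "\<dots> = mmul k mid (mmul k N ?C) i j"
    by (rule mmul_cong) (use assms(3) CM in auto)
  also have "\<dots> = mmul k N ?C i j" using assms(3) by (simp add: mmul_mid_left)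
  finally show ?thesis .
qed

section \<open>Polynomials evaluated at a matrix\<close>

definition mpoly :: "nat \<Rightarrow> (nat \<Rightarrow> nat \<Rightarrow> complex) \<Rightarrow> complex poly \<Rightarrow> nat \<Rightarrow> nat \<Rightarrow> complex" where
  "mpoly k M q = (\<lambda>i j. \<Sum>n\<le>degree q. coeff q n * mpow k M n i j)"

lemma mpoly_eq_sum:
  assumes "degree q < N"
  shows "mpoly k M q = (\<lambda>i j. \<Sum>n<N. coeff q n * mpow k M n i j)"
  unfolding mpoly_def using assms
  by (intro ext sum.mono_neutral_left) (auto simp: coeff_eq_0)

lemma mpoly_0 [simp]: "mpoly k M 0 i j = 0"
  by (simp add: mpoly_def)

lemma mpoly_add: "mpoly k M (p + q) i j = mpoly k M p i j + mpoly k M q i j"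
proof -
  define N where "N = Suc (max (degree p) (degree q))"
  have "degree (p + q) < N" "degree p < N" "degree q < N"
    using degree_add_le_max[of p q] by (auto simp: N_def)
  then show ?thesis by (simp add: mpoly_eq_sum algebra_simps sum.distrib)
qed

lemma mpoly_smult: "mpoly k M (Polynomial.smult a q) i j = a * mpoly k M q i j"
proof -
  have "degree (Polynomial.smult a q) < Suc (degree q)" "degree q < Suc (degree q)"
    using degree_smult_le[of a q] by auto
  from this[THEN mpoly_eq_sum] show ?thesis
    by (simp add: sum_distrib_left mult.assoc del: sum.lessThan_Suc)
qed

lemma mpoly_pCons: "mpoly k M (pCons a q) = (\<lambda>i j. a * mid i j + mmul k M (mpoly k M q) i j)"
proof (intro ext)
  fix i j
  have "degree (pCons a q) < Suc (Suc (degree q))"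
    using degree_pCons_le[of a q] by auto
  then have "mpoly k M (pCons a q) i j = a * mid i j + (\<Sum>n<Suc (degree q). coeff q n * mpow k M (Suc n) i j)"
    by (simp only: mpoly_eq_sum sum.lessThan_Suc_shift) simp
  also have "(\<Sum>n<Suc (degree q). coeff q n * mpow k M (Suc n) i j) = mmul k M (mpoly k M q) i j"
    by (simp add: mpoly_eq_sum[of q "Suc (degree q)"] mmul_sum_right del: sum.lessThan_Suc)
  finally show "mpoly k M (pCons a q) i j = a * mid i j + mmul k M (mpoly k M q) i j" .
qed

lemma mpoly_mult:
  "i \<in> {1..k} \<Longrightarrow> mpoly k M (p * q) i j = mmul k (mpoly k M p) (mpoly k M q) i j"
proof (induction p arbitrary: i rule: pCons_induct)
  case 0
  then show ?case by (simp add: mmul_def)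
next
  case (pCons a p)
  have "mpoly k M (pCons a p * q) i j = a * mpoly k M q i j + mmul k M (mpoly k M (p * q)) i j"
    by (simp add: mpoly_add mpoly_smult mpoly_pCons)
  also have "mmul k M (mpoly k M (p * q)) i j = mmul k (mmul k M (mpoly k M p)) (mpoly k M q) i j"
    unfolding mmul_assoc by (rule mmul_cong) (use pCons.IH in auto)
  also have "a * mpoly k M q i j = mmul k (\<lambda>i j. a * mid i j) (mpoly k M q) i j"
    using pCons.prems by (simp add: mmul_scale_left mmul_mid_left)
  finally show ?case by (simp add: mmul_add_left[symmetric] mpoly_pCons)
qed

lemma mpoly_commute:
  "i \<in> {1..k} \<Longrightarrow> mmul k (mpoly k M p) (mpoly k M q) i j = mmul k (mpoly k M q) (mpoly k M p) i j"
  by (metis mpoly_mult mult.commute)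

lemma mpoly_monom: "mpoly k M (monom c n) i j = c * mpow k M n i j"
  using mpoly_eq_sum[of "monom c n" "Suc n"] degree_monom_le[of c n] by simp

lemma mpoly_sum: "mpoly k M (\<Sum>h\<in>S. p h) i j = (\<Sum>h\<in>S. mpoly k M (p h) i j)"
  by (induction S rule: infinite_finite_induct) (auto simp: mpoly_add)

lemma mpoly_1: "mpoly k M 1 i j = mid i j"
  by (simp add: mpoly_def)

lemma mpow_eq_mpoly: "mpow k M n i j = mpoly k M (monom 1 n) i j"
  by (simp add: mpoly_monom)

section \<open>The companion matrix\<close>

lemma Acomp_row: "i \<in> {1..k-1} \<Longrightarrow> Acomp k s i l = (if l = i + 1 then 1 else 0)"
  unfolding Acomp_def by auto

lemma Acomp_last_row:
  "k \<ge> 1 \<Longrightarrow> Acomp k s k l = (if 1 \<le> l \<and> l \<le> k then (-1)^(k-l) * s (k+1-l) else 0)"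
  unfolding Acomp_def by auto

lemma mpow_Acomp_row:
  assumes "i \<in> {1..k}" "i + m \<le> k" "l \<in> {1..k}"
  shows "mpow k (Acomp k s) m i l = (if l = i + m then 1 else 0)"
  using assms
proof (induction m arbitrary: i)
  case 0
  then show ?case by (simp add: mid_def)
next
  case (Suc m)
  then have i: "i \<in> {1..k-1}" by auto
  have "mpow k (Acomp k s) (Suc m) i l = (\<Sum>l'\<in>{1..k}. if l' = i + 1 then mpow k (Acomp k s) m l' l else 0)"
    unfolding mpow.simps mmul_def Acomp_row[OF i] by (intro sum.cong) auto
  also have "\<dots> = mpow k (Acomp k s) m (i + 1) l" using i by auto
  also have "\<dots> = (if l = i + 1 + m then 1 else 0)" using Suc.prems by (intro Suc.IH) auto
  finally show ?case by simp
qed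

lemma poly_Ppoly: "poly (Ppoly k s) z = (\<Sum>h\<le>k. (-1)^h * scoef s h * z^(k-h))"
  by (simp add: Ppoly_def poly_sum poly_monom)

lemma poly_Ppoly_split: "poly (Ppoly k s) z = z^k + (\<Sum>h=1..k. (-1)^h * s h * z^(k-h))"
proof -
  have "{..k} = insert 0 {1..k}" by auto
  then show ?thesis by (simp add: poly_Ppoly scoef_def)
qed

lemma coeff_Ppoly: "coeff (Ppoly k s) n = (if n \<le> k then (-1)^(k-n) * scoef s (k-n) else 0)"
proof -
  have "coeff (Ppoly k s) n = (\<Sum>h\<le>k. if h = k - n \<and> n \<le> k then (-1)^h * scoef s h else 0)"
    unfolding Ppoly_def coeff_sum coeff_monom by (intro sum.cong) auto
  then show ?thesis by simp
qed

lemma degree_Ppoly: "degree (Ppoly k s) = k"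
  by (rule antisym, rule degree_le) (auto simp: coeff_Ppoly scoef_def intro!: le_degree)

lemma lead_coeff_Ppoly: "lead_coeff (Ppoly k s) = 1"
  by (simp add: degree_Ppoly coeff_Ppoly scoef_def)

lemma Ppoly_nonzero: "Ppoly k s \<noteq> 0"
  using lead_coeff_Ppoly[of k s] by auto

lemma pderiv_Ppoly: "pderiv (Ppoly k s) = (\<Sum>h<k. monom ((-1)^h * of_nat (k - h) * scoef s h) (k - h - 1))"
proof -
  have "pderiv (Ppoly k s) = (\<Sum>h\<le>k. monom (of_nat (k - h) * ((-1)^h * scoef s h)) (k - h - 1))"
    unfolding Ppoly_def using higher_pderiv_sum[of 1 "\<lambda>h. monom ((-1)^h * scoef s h) (k - h)" "{..k}"]
    by (simp add: pderiv_monom)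
  also have "\<dots> = (\<Sum>h<k. monom (of_nat (k - h) * ((-1)^h * scoef s h)) (k - h - 1))"
    by (simp add: lessThan_Suc_atMost[symmetric])
  finally show ?thesis by (simp add: mult_ac)
qed

lemma Pder_eq_poly_pderiv: "Pder k s z = poly (pderiv (Ppoly k s)) z"
  unfolding pderiv_Ppoly Pder_def by (simp add: poly_sum poly_monom)

lemma PderA_eq_mpoly: "PderA k s = mpoly k (Acomp k s) (pderiv (Ppoly k s))"
  unfolding pderiv_Ppoly PderA_def by (intro ext) (simp add: mpoly_sum mpoly_monom)

lemma PderA_commute_mpow:
  "i \<in> {1..k} \<Longrightarrow> mmul k (mpow k (Acomp k s) n) (PderA k s) i j = mmul k (PderA k s) (mpow k (Acomp k s) n) i j"
  unfolding PderA_eq_mpoly mpow_eq_mpoly[abs_def] by (rule mpoly_commute)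

lemma PderA_commute_Acomp:
  assumes "i \<in> {1..k}" "j \<in> {1..k}"
  shows "mmul k (Acomp k s) (PderA k s) i j = mmul k (PderA k s) (Acomp k s) i j"
proof -
  have "mmul k (Acomp k s) (PderA k s) i j = mmul k (mpow k (Acomp k s) 1) (PderA k s) i j"
    using mpow_1 by (intro mmul_cong) auto
  also have "\<dots> = mmul k (PderA k s) (mpow k (Acomp k s) 1) i j" by (rule PderA_commute_mpow[OF assms(1)])
  also have "\<dots> = mmul k (PderA k s) (Acomp k s) i j" using mpow_1 assms(2) by (intro mmul_cong) auto
  finally show ?thesis .
qed

text \<open>The first row of \<open>P\<^sub>s(A(s))\<close> vanishes because \<open>A(s)\<^sup>n\<close> maps the first unit row vector to
  the \<open>(n+1)\<close>-st one for \<open>n < k\<close>; the other rows are obtained from the first one by multiplying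
  with powers of \<open>A(s)\<close>.\<close>

lemma Acomp_Cayley_Hamilton_first_row:
  assumes "j \<in> {1..k}"
  shows "mpoly k (Acomp k s) (Ppoly k s) 1 j = 0"
proof -
  let ?A = "Acomp k s" and ?P = "Ppoly k s"
  have one: "1 \<in> {1..k}" using assms by auto
  obtain k' where k': "k = Suc k'" using one by (cases k) auto
  have "mpow k ?A k 1 j = mmul k (mpow k ?A k') ?A 1 j"
    using mpow_commute_base[OF one assms] by (simp add: k')
  also have "\<dots> = (\<Sum>l\<in>{1..k}. if l = k then ?A l j else 0)"
    unfolding mmul_def by (intro sum.cong refl) (use mpow_Acomp_row[OF one] k' in auto)
  also have "\<dots> = (-1)^(k-j) * s (k+1-j)" using assms by (simp add: Acomp_last_row)
  finally have top: "mpow k ?A k 1 j = (-1)^(k-j) * s (k+1-j)" .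
  have "(\<Sum>n<k. coeff ?P n * mpow k ?A n 1 j) = (\<Sum>n<k. if n = j - 1 then coeff ?P n else 0)"
    by (intro sum.cong refl) (use assms mpow_Acomp_row[OF one] in auto)
  also have "\<dots> = (-1)^(Suc (k-j)) * s (k+1-j)"
    using assms by (auto simp: coeff_Ppoly scoef_def Suc_diff_le)
  finally have low: "(\<Sum>n<k. coeff ?P n * mpow k ?A n 1 j) = - ((-1)^(k-j) * s (k+1-j))" by simp
  have lead: "coeff ?P k = 1" by (simp add: coeff_Ppoly scoef_def)
  have "mpoly k ?A ?P 1 j = (\<Sum>n<k. coeff ?P n * mpow k ?A n 1 j) + coeff ?P k * mpow k ?A k 1 j"
    unfolding mpoly_def degree_Ppoly lessThan_Suc_atMost[symmetric] by (simp only: sum.lessThan_Suc)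
  then show ?thesis unfolding low lead top by simp
qed

lemma Acomp_Cayley_Hamilton:
  assumes "i \<in> {1..k}" "j \<in> {1..k}"
  shows "mpoly k (Acomp k s) (Ppoly k s) i j = 0"
proof -
  let ?A = "Acomp k s" and ?P = "Ppoly k s"
  have one: "1 \<in> {1..k}" using assms by auto
  have "mmul k (mpow k ?A (i-1)) (mpoly k ?A ?P) 1 j = (\<Sum>l\<in>{1..k}. if l = i then mpoly k ?A ?P l j else 0)"
    unfolding mmul_def by (intro sum.cong refl) (use mpow_Acomp_row[OF one] assms(1) in auto)
  then have "mpoly k ?A ?P i j = mmul k (mpow k ?A (i-1)) (mpoly k ?A ?P) 1 j"
    using assms(1) by simp
  also have "\<dots> = mmul k (mpoly k ?A ?P) (mpow k ?A (i-1)) 1 j"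
    unfolding mpow_eq_mpoly[abs_def] by (rule mpoly_commute[OF one])
  also have "\<dots> = 0" unfolding mmul_def using Acomp_Cayley_Hamilton_first_row by simp
  finally show ?thesis .
qed

definition Evec :: "complex \<Rightarrow> nat \<Rightarrow> complex" where
  "Evec z l = z ^ (l - 1)"

lemma Acomp_Evec:
  assumes "i \<in> {1..k}"
  shows "mvec k (Acomp k s) (Evec z) i = z * Evec z i - (if i = k then poly (Ppoly k s) z else 0)"
proof (cases "i = k")
  case True
  have "mvec k (Acomp k s) (Evec z) i = (\<Sum>l=1..k. (-1)^(k-l) * s (k+1-l) * z^(l-1))"
    unfolding mvec_def True Evec_def using assms by (intro sum.cong) (auto simp: Acomp_last_row)
  also have "\<dots> = (\<Sum>h=1..k. (-1)^(h-1) * s h * z^(k-h))"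
    by (rule sum.reindex_bij_witness[of _ "\<lambda>h. k+1-h" "\<lambda>l. k+1-l"]) (auto simp: Suc_diff_le)
  also have "\<dots> = - (\<Sum>h=1..k. (-1)^h * s h * z^(k-h))"
    unfolding sum_negf[symmetric] by (intro sum.cong refl) (auto simp: power_eq_if)
  also have "\<dots> = z * Evec z i - poly (Ppoly k s) z"
    using True assms by (cases k) (auto simp: poly_Ppoly_split Evec_def)
  finally show ?thesis using True by simp
next
  case False
  then have i: "i \<in> {1..k-1}" using assms by auto
  have "mvec k (Acomp k s) (Evec z) i = (\<Sum>l\<in>{1..k}. if l = i + 1 then z^(l-1) else 0)"
    unfolding mvec_def Evec_def by (intro sum.cong) (auto simp: Acomp_row[OF i])
  also have "\<dots> = z * Evec z i" using i by (cases i) (auto simp: Evec_def)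
  finally show ?thesis using False by simp
qed

lemma mpoly_Acomp_Evec:
  obtains W where "\<And>i. W i holomorphic_on UNIV"
    "\<And>z i. i \<in> {1..k} \<Longrightarrow>
       mvec k (mpoly k (Acomp k s) q) (Evec z) i = poly q z * Evec z i - poly (Ppoly k s) z * W i z"
proof -
  let ?A = "Acomp k s" and ?P = "\<lambda>z. poly (Ppoly k s) z"
  have "\<exists>W. (\<forall>i. W i holomorphic_on UNIV) \<and> (\<forall>z. \<forall>i\<in>{1..k}.
     mvec k (mpoly k ?A q) (Evec z) i = poly q z * Evec z i - ?P z * W i z)"
  proof (induction q rule: pCons_induct)
    case 0
    show ?case by (intro exI[of _ "\<lambda>i z. 0"]) (simp add: mvec_def)
  next
    case (pCons a q)
    then obtain W where W: "\<And>i. W i holomorphic_on UNIV"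
      "\<And>z i. i \<in> {1..k} \<Longrightarrow> mvec k (mpoly k ?A q) (Evec z) i = poly q z * Evec z i - ?P z * W i z"
      by blast
    define W' where "W' i z = (if i = k then poly q z else 0) + mvec k ?A (\<lambda>l. W l z) i" for i z
    have "W' i holomorphic_on UNIV" for i
      unfolding W'_def mvec_def using W(1) by (cases "i = k") (auto intro!: holomorphic_intros)
    moreover have "mvec k (mpoly k ?A (pCons a q)) (Evec z) i = poly (pCons a q) z * Evec z i - ?P z * W' i z"
      if i: "i \<in> {1..k}" for z i
    proof -
      have "mvec k (mpoly k ?A (pCons a q)) (Evec z) i
          = a * Evec z i + mvec k ?A (mvec k (mpoly k ?A q) (Evec z)) i"
        by (simp add: mpoly_pCons mvec_add_left mvec_scale_left mvec_mid[OF i] mvec_mmul[symmetric])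
      also have "mvec k ?A (mvec k (mpoly k ?A q) (Evec z)) i
          = mvec k ?A (\<lambda>l. poly q z * Evec z l - ?P z * W l z) i"
        by (intro mvec_cong refl W(2))
      also have "\<dots> = poly q z * (z * Evec z i - (if i = k then ?P z else 0)) - ?P z * mvec k ?A (\<lambda>l. W l z) i"
        by (simp add: mvec_diff_right mvec_scale_right Acomp_Evec[OF i])
      finally show ?thesis by (cases "i = k") (simp_all add: W'_def algebra_simps)
    qed
    ultimately show ?case by blast
  qed
  then show ?thesis using that by blast
qed

section \<open>Invertibility of \<open>P'\<^sub>s(A(s))\<close> and the discriminant\<close>

lemma PderA_not_minvertible:
  assumes "k \<ge> 1" "poly (Ppoly k s) z = 0" "poly (pderiv (Ppoly k s)) z = 0"
  shows "\<not> minvertible k (PderA k s)"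
proof
  assume inv: "minvertible k (PderA k s)"
  obtain W where "\<And>z i. i \<in> {1..k} \<Longrightarrow> mvec k (PderA k s) (Evec z) i
      = poly (pderiv (Ppoly k s)) z * Evec z i - poly (Ppoly k s) z * W i z"
    using mpoly_Acomp_Evec unfolding PderA_eq_mpoly by metis
  then have "mvec k (PderA k s) (Evec z) l = 0" if "l \<in> {1..k}" for l
    using assms that by simp
  then have "mvec k (minv k (PderA k s)) (mvec k (PderA k s) (Evec z)) 1 = 0"
    by (rule mvec_eq_0I)
  moreover have "mvec k (minv k (PderA k s)) (mvec k (PderA k s) (Evec z)) 1 = 1"
    using mvec_minv_cancel_left[OF inv] assms(1) by (simp add: Evec_def)
  ultimately show False by simp
qed

lemma coprime_if_no_common_root:
  fixes p q :: "complex poly"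
  assumes "p \<noteq> 0" "\<And>z. poly p z = 0 \<Longrightarrow> poly q z \<noteq> 0"
  shows "coprime p q"
proof (rule ccontr)
  assume "\<not> coprime p q"
  then have "\<not> is_unit (gcd p q)" using is_unit_gcd by blast
  moreover have "gcd p q \<noteq> 0" using assms(1) by simp
  ultimately have "degree (gcd p q) \<noteq> 0" using is_unit_iff_degree by blast
  then have "\<not> constant (poly (gcd p q))" by (simp add: constant_degree)
  then obtain z where "poly (gcd p q) z = 0" using fundamental_theorem_of_algebra by blast
  then have "poly p z = 0" "poly q z = 0"
    by (meson dvd_trans gcd_dvd1 gcd_dvd2 poly_eq_0_iff_dvd)+
  with assms(2) show False by blast
qed

text \<open>If \<open>a P + b P' = 1\<close>, then \<open>b(A(s))\<close> inverts \<open>P'\<^sub>s(A(s))\<close> by Cayley--Hamilton.\<close>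

lemma PderA_minvertible:
  assumes "coprime (Ppoly k s) (pderiv (Ppoly k s))"
  shows "minvertible k (PderA k s)"
proof -
  let ?A = "Acomp k s" and ?P = "Ppoly k s"
  obtain a b where ab: "a * ?P + b * pderiv ?P = 1"
    using bezout_coefficients_fst_snd[of ?P "pderiv ?P"] assms by auto
  have left: "mmul k (mpoly k ?A b) (PderA k s) i j = mid i j" if "i \<in> {1..k}" "j \<in> {1..k}" for i j
  proof -
    have "mid i j = mpoly k ?A (a * ?P + b * pderiv ?P) i j" by (simp add: ab mpoly_1)
    also have "\<dots> = mmul k (mpoly k ?A a) (mpoly k ?A ?P) i j + mmul k (mpoly k ?A b) (PderA k s) i j"
      using that by (simp add: mpoly_add mpoly_mult PderA_eq_mpoly)
    also have "mmul k (mpoly k ?A a) (mpoly k ?A ?P) i j = 0"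
      unfolding mmul_def using Acomp_Cayley_Hamilton that by simp
    finally show ?thesis by simp
  qed
  have "is_minv k (PderA k s) (mpoly k ?A b)"
    unfolding is_minv_def using left mpoly_commute by (simp add: PderA_eq_mpoly)
  then show ?thesis unfolding minvertible_def by blast
qed

lemma minvertible_PderA_iff:
  assumes "k \<ge> 1"
  shows "minvertible k (PderA k s) \<longleftrightarrow> rsquarefree (Ppoly k s)"
  using PderA_not_minvertible[OF assms] PderA_minvertible
    coprime_if_no_common_root[OF Ppoly_nonzero] rsquarefree_roots by metis

definition root_discr :: "'a::idom list \<Rightarrow> 'a" where
  "root_discr zs = (\<Prod>(i, j)\<in>{(i, j). i < j \<and> j < length zs}. (zs ! i - zs ! j)^2)"

lemma root_discr_eq_0_iff: "root_discr zs = 0 \<longleftrightarrow> \<not> distinct zs"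
proof -
  have fin: "finite {(i, j). i < j \<and> j < length zs}"
    by (rule finite_subset[of _ "{..<length zs} \<times> {..<length zs}"]) auto
  have "root_discr zs = 0 \<longleftrightarrow> (\<exists>i j. i < j \<and> j < length zs \<and> zs ! i = zs ! j)"
    unfolding root_discr_def prod_zero_iff[OF fin] by auto
  also have "\<dots> \<longleftrightarrow> \<not> distinct zs"
  proof
    assume "\<exists>i j. i < j \<and> j < length zs \<and> zs ! i = zs ! j"
    then obtain i j where "i < j" "j < length zs" "zs ! i = zs ! j" by blast
    then show "\<not> distinct zs" using nth_eq_iff_index_eq[of zs i j] by auto
  next
    assume "\<not> distinct zs"
    then obtain i j where ij: "i < length zs" "j < length zs" "i \<noteq> j" "zs ! i = zs ! j"
      by (metis distinct_conv_nth)
    show "\<exists>i j. i < j \<and> j < length zs \<and> zs ! i = zs ! j"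
    proof (cases "i < j")
      case False
      then show ?thesis using ij by (intro exI[of _ j] exI[of _ i]) auto
    qed (use ij in blast)
  qed
  finally show ?thesis .
qed

text \<open>Up to a sign depending only on the length, \<open>root_discr\<close> is the product of \<open>z\<^sub>i - z\<^sub>j\<close> over all
  ordered pairs \<open>i \<noteq> j\<close>, which is invariant under permutations of the list.\<close>

lemma root_discr_offdiag:
  "(\<Prod>(i, j)\<in>{(i, j). i \<noteq> j \<and> i < length zs \<and> j < length zs}. zs ! i - zs ! j)
     = (-1) ^ card {(i, j). i < j \<and> j < length zs} * root_discr zs"
proof -
  define Lo where "Lo = {(i, j). i < j \<and> j < length zs}"
  define g where "g = (\<lambda>(i, j). zs ! i - zs ! j)"
  have fin: "finite Lo" unfolding Lo_def
    by (rule finite_subset[of _ "{..<length zs} \<times> {..<length zs}"]) auto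
  have split: "{(i, j). i \<noteq> j \<and> i < length zs \<and> j < length zs} = Lo \<union> prod.swap ` Lo"
    unfolding Lo_def by (auto simp: neq_iff image_iff)
  have "(\<Prod>x\<in>Lo \<union> prod.swap ` Lo. g x) = (\<Prod>x\<in>Lo. g x) * (\<Prod>x\<in>Lo. g (prod.swap x))"
    using fin by (subst prod.union_disjoint) (auto simp: Lo_def prod.reindex inj_on_def)
  also have "\<dots> = (\<Prod>x\<in>Lo. (-1) * (g x)^2)"
    unfolding prod.distrib[symmetric] by (intro prod.cong) (auto simp: g_def power2_eq_square algebra_simps)
  also have "\<dots> = (-1) ^ card Lo * root_discr zs"
    unfolding prod.distrib by (simp add: root_discr_def Lo_def g_def case_prod_unfold)
  finally show ?thesis unfolding split g_def Lo_def .
qed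

lemma prod_offdiag_permute:
  assumes "p permutes {..<n}"
  shows "(\<Prod>(i, j)\<in>{(i, j). i \<noteq> j \<and> i < n \<and> j < n}. f (p i) (p j))
       = (\<Prod>(i, j)\<in>{(i, j). i \<noteq> j \<and> i < n \<and> j < n}. f i j)"
proof -
  have [simp]: "p (inv_into UNIV p x) = x" "inv_into UNIV p (p x) = x" for x
    using permutes_inverses[OF assms] by auto
  have [simp]: "p x < n \<longleftrightarrow> x < n" "inv_into UNIV p x < n \<longleftrightarrow> x < n" for x
    using permutes_in_image[OF assms, of x] permutes_in_image[OF permutes_inv[OF assms], of x] by auto
  have [simp]: "p x = p y \<longleftrightarrow> x = y" "inv_into UNIV p x = inv_into UNIV p y \<longleftrightarrow> x = y" for x y
    by (metis \<open>inv_into UNIV p (p _) = _\<close>) (metis \<open>p (inv_into UNIV p _) = _\<close>)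
  show ?thesis
    by (rule prod.reindex_bij_witness[of _ "\<lambda>(i, j). (inv_into UNIV p i, inv_into UNIV p j)" "\<lambda>(i, j). (p i, p j)"]) auto
qed

lemma root_discr_mset:
  assumes "mset zs = mset zs'"
  shows "root_discr zs = root_discr zs'"
proof -
  obtain p where p: "p permutes {..<length zs'}" "permute_list p zs' = zs"
    using mset_eq_permutation[OF assms] .
  define n where "n = length zs'"
  have len: "length zs = n" unfolding p(2)[symmetric] n_def by simp
  define Off where "Off = {(i, j). i \<noteq> j \<and> i < n \<and> j < n}"
  have "(\<Prod>(i, j)\<in>Off. zs ! i - zs ! j) = (\<Prod>(i, j)\<in>Off. zs' ! p i - zs' ! p j)"
    using p by (intro prod.cong) (auto simp: Off_def n_def permute_list_nth)
  also have "\<dots> = (\<Prod>(i, j)\<in>Off. zs' ! i - zs' ! j)"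
    unfolding Off_def by (rule prod_offdiag_permute) (use p(1) n_def in simp)
  finally show ?thesis
    using root_discr_offdiag[of zs] root_discr_offdiag[of zs'] by (simp add: Off_def len n_def)
qed

lemma proots_prod_linear: "proots (\<Prod>z\<leftarrow>zs. [:-z, 1:]) = mset zs"
proof (induction zs)
  case (Cons a zs)
  have "(\<Prod>z\<leftarrow>zs. [:-z, 1:]) \<noteq> 0" by (auto simp: prod_list_zero_iff)
  then have "proots (\<Prod>z\<leftarrow>a # zs. [:-z, 1:]) = proots [:-a, 1:] + proots (\<Prod>z\<leftarrow>zs. [:-z, 1:])"
    by (simp only: list.map prod_list.Cons, intro proots_mult) auto
  also have "proots [:-a, 1:] = {#a#}" using proots_linear_factor[of "-a"] by simp
  finally show ?case using Cons by simp
qed simp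

lemma distinct_iff_rsquarefree:
  fixes p :: "'a::idom poly"
  assumes "p \<noteq> 0" "mset zs = proots p"
  shows "distinct zs \<longleftrightarrow> rsquarefree p"
proof -
  have "distinct zs \<longleftrightarrow> (\<forall>z. count (mset zs) z \<le> 1)"
  proof
    assume "distinct zs"
    then show "\<forall>z. count (mset zs) z \<le> 1" by (simp add: distinct_count_atmost_1)
  next
    assume le: "\<forall>z. count (mset zs) z \<le> 1"
    show "distinct zs" unfolding distinct_count_atmost_1
    proof
      fix z
      show "count (mset zs) z = (if z \<in> set zs then 1 else 0)"
      proof (cases "z \<in> set zs")
        case True
        then have "count (mset zs) z \<noteq> 0" by simp
        then have "count (mset zs) z = 1" using le[rule_format, of z] by linarith
        then show ?thesis using True by simp
      qed simp
    qed
  qed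
  also have "\<dots> \<longleftrightarrow> (\<forall>z. order z p \<le> 1)"
    using assms by simp
  also have "\<dots> \<longleftrightarrow> rsquarefree p"
    using assms(1) unfolding rsquarefree_def le_Suc_eq le_zero_eq One_nat_def by blast
  finally show ?thesis .
qed

lemma Ppoly_linear_factors: "\<exists>zs. length zs = k \<and> Ppoly k s = (\<Prod>z\<leftarrow>zs. [:-z, 1:])"
proof -
  obtain zs where zs: "mset zs = proots (Ppoly k s)" using ex_mset by blast
  have "Ppoly k s = Polynomial.smult (lead_coeff (Ppoly k s)) (\<Prod>x\<in>#proots (Ppoly k s). [:-x, 1:])"
    by (rule complex_poly_decompose_multiset[symmetric])
  also have "\<dots> = (\<Prod>x\<in>#mset zs. [:-x, 1:])" by (simp add: lead_coeff_Ppoly zs)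
  also have "\<dots> = (\<Prod>z\<leftarrow>zs. [:-z, 1:])" by (simp only: mset_map[symmetric] prod_mset_prod_list)
  finally have "Ppoly k s = (\<Prod>z\<leftarrow>zs. [:-z, 1:])" .
  moreover have "length zs = k"
    using arg_cong[OF zs, of size] by (simp add: size_proots_complex degree_Ppoly)
  ultimately show ?thesis by blast
qed

lemma discr_eq_root_discr:
  assumes "length zs = k" "Ppoly k s = (\<Prod>z\<leftarrow>zs. [:-z, 1:])"
  shows "discr k s = root_discr zs"
  unfolding discr_def
proof (rule the_equality)
  show "\<exists>zs'. length zs' = k \<and> Ppoly k s = (\<Prod>z\<leftarrow>zs'. [:-z, 1:]) \<and>
      root_discr zs = (\<Prod>(i, j)\<in>{(i, j). i < j \<and> j < k}. (zs' ! i - zs' ! j)^2)"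
    using assms by (auto simp: root_discr_def)
  fix d assume "\<exists>zs'. length zs' = k \<and> Ppoly k s = (\<Prod>z\<leftarrow>zs'. [:-z, 1:]) \<and>
      d = (\<Prod>(i, j)\<in>{(i, j). i < j \<and> j < k}. (zs' ! i - zs' ! j)^2)"
  then obtain zs' where zs': "length zs' = k" "Ppoly k s = (\<Prod>z\<leftarrow>zs'. [:-z, 1:])" "d = root_discr zs'"
    by (auto simp: root_discr_def)
  have "mset zs' = mset zs" using assms(2) zs'(2) proots_prod_linear by metis
  then show "d = root_discr zs" using zs'(3) root_discr_mset by metis
qed

lemma discr_eq_0_iff: "discr k s = 0 \<longleftrightarrow> \<not> rsquarefree (Ppoly k s)"
proof -
  obtain zs where zs: "length zs = k" "Ppoly k s = (\<Prod>z\<leftarrow>zs. [:-z, 1:])"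
    using Ppoly_linear_factors by blast
  have "mset zs = proots (Ppoly k s)" using zs(2) by (simp add: proots_prod_linear)
  then show ?thesis
    using discr_eq_root_discr[OF zs] root_discr_eq_0_iff distinct_iff_rsquarefree[OF Ppoly_nonzero] by metis
qed

lemma Ck_diff_DiscSet:
  assumes "k \<ge> 1"
  shows "Ck k - DiscSet k = {s \<in> Ck k. minvertible k (PderA k s)}"
  unfolding DiscSet_def minvertible_PderA_iff[OF assms] discr_eq_0_iff by auto

section \<open>Holomorphic dependence on \<open>s\<close>\<close>

definition separately_entire :: "((nat \<Rightarrow> complex) \<Rightarrow> complex) \<Rightarrow> bool" where
  "separately_entire F \<longleftrightarrow> continuous_on UNIV F \<and> (\<forall>s j. (\<lambda>t. F (s(j := t))) holomorphic_on UNIV)"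

lemma separately_entire_const: "separately_entire (\<lambda>s. c)"
  by (simp add: separately_entire_def)

lemma separately_entire_coordinate: "separately_entire (\<lambda>s. s i)"
  unfolding separately_entire_def
proof (intro conjI allI)
  fix s :: "nat \<Rightarrow> complex" and j
  show "(\<lambda>t. (s(j := t)) i) holomorphic_on UNIV"
    by (cases "i = j") (auto intro!: holomorphic_intros)
qed simp

lemma separately_entire_mult:
  "separately_entire F \<Longrightarrow> separately_entire G \<Longrightarrow> separately_entire (\<lambda>s. F s * G s)"
  unfolding separately_entire_def by (auto intro!: continuous_intros holomorphic_intros)

lemma separately_entire_sum:
  "(\<And>x. x \<in> S \<Longrightarrow> separately_entire (F x)) \<Longrightarrow> separately_entire (\<lambda>s. \<Sum>x\<in>S. F x s)"
  unfolding separately_entire_def by (auto intro!: continuous_on_sum holomorphic_on_sum)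

lemma separately_entire_prod:
  "(\<And>x. x \<in> S \<Longrightarrow> separately_entire (F x)) \<Longrightarrow> separately_entire (\<lambda>s. \<Prod>x\<in>S. F x s)"
  unfolding separately_entire_def by (auto intro!: continuous_on_prod holomorphic_on_prod)

lemma separately_entire_scoef: "separately_entire (\<lambda>s. scoef s h)"
  by (cases "h = 0") (simp_all add: scoef_def separately_entire_const separately_entire_coordinate)

lemma separately_entire_Acomp: "separately_entire (\<lambda>s. Acomp k s i j)"
proof -
  have "(\<lambda>s. Acomp k s i j) = (if 1 \<le> i \<and> i \<le> k - 1 \<and> j = i + 1 then (\<lambda>s. 1)
      else if i = k \<and> 1 \<le> j \<and> j \<le> k then (\<lambda>s. (-1)^(k-j) * s (k+1-j)) else (\<lambda>s. 0))"
    by (auto simp: Acomp_def)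
  then show ?thesis
    by (auto intro!: separately_entire_mult separately_entire_coordinate simp: separately_entire_const)
qed

lemma separately_entire_mmul:
  "(\<And>l. separately_entire (\<lambda>s. M s i l)) \<Longrightarrow> (\<And>l. separately_entire (\<lambda>s. N s l j))
    \<Longrightarrow> separately_entire (\<lambda>s. mmul k (M s) (N s) i j)"
  unfolding mmul_def by (intro separately_entire_sum separately_entire_mult)

lemma separately_entire_mpow: "separately_entire (\<lambda>s. mpow k (Acomp k s) n i j)"
  by (induction n arbitrary: i j)
     (simp_all add: separately_entire_const separately_entire_mmul separately_entire_Acomp)

lemma separately_entire_PderA: "separately_entire (\<lambda>s. PderA k s i j)"
  unfolding PderA_def
  by (intro separately_entire_sum separately_entire_mult separately_entire_const
      separately_entire_scoef separately_entire_mpow)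

lemma separately_entire_det:
  assumes "\<And>s. M s \<in> carrier_mat n n" "\<And>i j. i < n \<Longrightarrow> j < n \<Longrightarrow> separately_entire (\<lambda>s. M s $$ (i, j))"
  shows "separately_entire (\<lambda>s. Determinant.det (M s))"
proof -
  have "separately_entire (\<lambda>s. \<Sum>p\<in>{p. p permutes {0..<n}}. of_int (sign p) * (\<Prod>i\<in>{0..<n}. M s $$ (i, p i)))"
  proof (intro separately_entire_sum separately_entire_mult separately_entire_const separately_entire_prod)
    fix p i assume "p \<in> {p. p permutes {0..<n}}" "i \<in> {0..<n}"
    then show "separately_entire (\<lambda>s. M s $$ (i, p i))"
      using permutes_in_image[of p "{0..<n}" i] by (intro assms(2)) auto
  qed
  then show ?thesis using det_def'[OF assms(1)] by simp
qed

definition to_mat :: "nat \<Rightarrow> (nat \<Rightarrow> nat \<Rightarrow> complex) \<Rightarrow> complex mat" where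
  "to_mat k M = Matrix.mat k k (\<lambda>(i, j). M (Suc i) (Suc j))"

lemma to_mat_carrier: "to_mat k M \<in> carrier_mat k k"
  by (simp add: to_mat_def)

lemma index_to_mat: "i < k \<Longrightarrow> j < k \<Longrightarrow> to_mat k M $$ (i, j) = M (Suc i) (Suc j)"
  by (simp add: to_mat_def)

lemma index_mult_to_mat:
  assumes "i < k" "j < k"
  shows "(to_mat k M * to_mat k N) $$ (i, j) = mmul k M N (Suc i) (Suc j)"
  using assms
  by (simp add: mmul_def scalar_prod_def to_mat_def atLeast0LessThan sum.atLeast1_atMost_eq)

lemma ball_atLeast1_atMost: "(\<forall>i\<in>{1..k}. P i) \<longleftrightarrow> (\<forall>i<k. P (Suc i))"
proof
  assume h: "\<forall>i<k. P (Suc i)"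
  show "\<forall>i\<in>{1..k}. P i"
  proof
    fix i assume "i \<in> {1..k}"
    then obtain i' where "i = Suc i'" "i' < k" by (cases i) auto
    then show "P i" using h by simp
  qed
qed simp

lemma to_mat_mult_eq_1_iff:
  "to_mat k M * to_mat k N = 1\<^sub>m k \<longleftrightarrow> (\<forall>i\<in>{1..k}. \<forall>j\<in>{1..k}. mmul k M N i j = mid i j)"
proof -
  have "to_mat k M * to_mat k N = 1\<^sub>m k \<longleftrightarrow> (\<forall>i<k. \<forall>j<k. mmul k M N (Suc i) (Suc j) = mid (Suc i) (Suc j))"
    by (auto simp: mat_eq_iff index_mult_to_mat mid_def) (auto simp: to_mat_def)
  also have "\<dots> \<longleftrightarrow> (\<forall>i\<in>{1..k}. \<forall>j\<in>{1..k}. mmul k M N i j = mid i j)"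
    by (simp only: ball_atLeast1_atMost)
  finally show ?thesis .
qed

lemma is_minv_iff_to_mat:
  "is_minv k M C \<longleftrightarrow> to_mat k M * to_mat k C = 1\<^sub>m k \<and> to_mat k C * to_mat k M = 1\<^sub>m k"
  unfolding is_minv_def to_mat_mult_eq_1_iff by blast

lemma is_minv_adj_mat:
  assumes "Determinant.det (to_mat k M) \<noteq> 0"
  shows "is_minv k M (\<lambda>i j. adj_mat (to_mat k M) $$ (i - 1, j - 1) / Determinant.det (to_mat k M))"
proof -
  let ?A = "to_mat k M" and ?d = "Determinant.det (to_mat k M)"
  have C_eq: "to_mat k (\<lambda>i j. adj_mat ?A $$ (i - 1, j - 1) / ?d) = (1 / ?d) \<cdot>\<^sub>m adj_mat ?A"
    by (rule eq_matI) (use adj_mat(1)[OF to_mat_carrier[of k M]] in \<open>auto simp: to_mat_def\<close>)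
  have scale: "(1 / ?d) \<cdot>\<^sub>m (?d \<cdot>\<^sub>m 1\<^sub>m k) = 1\<^sub>m k"
    using assms by (intro eq_matI) auto
  have "?A * ((1 / ?d) \<cdot>\<^sub>m adj_mat ?A) = (1 / ?d) \<cdot>\<^sub>m (?A * adj_mat ?A)"
    by (rule mult_smult_distrib[OF to_mat_carrier adj_mat(1)[OF to_mat_carrier]])
  moreover have "((1 / ?d) \<cdot>\<^sub>m adj_mat ?A) * ?A = (1 / ?d) \<cdot>\<^sub>m (adj_mat ?A * ?A)"
    by (rule mult_smult_assoc_mat[OF adj_mat(1)[OF to_mat_carrier] to_mat_carrier])
  ultimately show ?thesis
    unfolding is_minv_iff_to_mat C_eq using adj_mat(2,3)[OF to_mat_carrier] scale by simp
qed

lemma minvertible_iff_det: "minvertible k M \<longleftrightarrow> Determinant.det (to_mat k M) \<noteq> 0"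
proof
  assume "minvertible k M"
  then obtain C where "to_mat k M * to_mat k C = 1\<^sub>m k"
    unfolding minvertible_def is_minv_iff_to_mat by blast
  then have "Determinant.det (to_mat k M) * Determinant.det (to_mat k C) = 1"
    using det_mult[OF to_mat_carrier to_mat_carrier, of k M C] by simp
  then show "Determinant.det (to_mat k M) \<noteq> 0" by auto
qed (use is_minv_adj_mat minvertible_def in blast)

lemma minv_eq_adj_mat:
  assumes "minvertible k M" "i \<in> {1..k}" "j \<in> {1..k}"
  shows "minv k M i j = adj_mat (to_mat k M) $$ (i - 1, j - 1) / Determinant.det (to_mat k M)"
  using is_minv_unique[OF is_minv_minv[OF assms(1)] is_minv_adj_mat assms(2,3)] assms(1)
  by (simp add: minvertible_iff_det)

lemma separately_entire_det_to_mat: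
  "(\<And>i j. separately_entire (\<lambda>s. M s i j)) \<Longrightarrow> separately_entire (\<lambda>s. Determinant.det (to_mat k (M s)))"
  by (rule separately_entire_det[of _ k]) (simp_all add: to_mat_carrier index_to_mat)

lemma separately_entire_adj_mat_to_mat:
  assumes "\<And>i j. separately_entire (\<lambda>s. M s i j)" "a < k" "b < k"
  shows "separately_entire (\<lambda>s. adj_mat (to_mat k (M s)) $$ (a, b))"
proof -
  have "separately_entire (\<lambda>s. Determinant.det (mat_delete (to_mat k (M s)) b a))"
    by (rule separately_entire_det[of _ "k - 1"]) (auto simp: mat_delete_def to_mat_def assms(1))
  then show ?thesis
    using assms(2,3) by (simp add: adj_mat_def to_mat_def cofactor_def separately_entire_mult separately_entire_const)
qed

lemma holo_k_if_separately_entire: "separately_entire F \<Longrightarrow> holo_k k U F"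
  unfolding separately_entire_def holo_k_def
  by (auto intro: continuous_on_subset holomorphic_on_imp_differentiable_at)

lemma holo_k_add: "holo_k k U F \<Longrightarrow> holo_k k U G \<Longrightarrow> holo_k k U (\<lambda>s. F s + G s)"
  unfolding holo_k_def by (auto intro!: continuous_intros field_differentiable_add)

lemma holo_k_mult: "holo_k k U F \<Longrightarrow> holo_k k U G \<Longrightarrow> holo_k k U (\<lambda>s. F s * G s)"
  unfolding holo_k_def by (auto intro!: continuous_intros field_differentiable_mult)

lemma holo_k_divide:
  "holo_k k U F \<Longrightarrow> holo_k k U G \<Longrightarrow> (\<And>s. s \<in> U \<Longrightarrow> G s \<noteq> 0) \<Longrightarrow> holo_k k U (\<lambda>s. F s / G s)"
  unfolding holo_k_def by (auto intro!: continuous_intros field_differentiable_divide)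

lemma holo_k_sum: "(\<And>x. x \<in> S \<Longrightarrow> holo_k k U (F x)) \<Longrightarrow> holo_k k U (\<lambda>s. \<Sum>x\<in>S. F x s)"
  by (induction S rule: infinite_finite_induct)
     (simp_all add: holo_k_add holo_k_if_separately_entire separately_entire_const)

lemma holo_k_mvec:
  assumes "\<And>l. l \<in> {1..k} \<Longrightarrow> holo_k k U (\<lambda>s. M s i l)" "\<And>l. l \<in> {1..k} \<Longrightarrow> holo_k k U (\<lambda>s. v s l)"
  shows "holo_k k U (\<lambda>s. mvec k (M s) (v s) i)"
  unfolding mvec_def using assms by (intro holo_k_sum holo_k_mult)

lemma eventually_line_in_admissible:
  assumes "admissible k U" "s \<in> U" "j \<in> {1..k}"
  shows "\<forall>\<^sub>F t in nhds (s j). s(j := t) \<in> U"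
proof -
  obtain T where T: "open T" "U = Ck k \<inter> T"
    using assms(1) unfolding admissible_def openin_open by blast
  have "continuous_on UNIV (\<lambda>t::complex. s(j := t))"
  proof (intro continuous_on_coordinatewise_then_product)
    fix i show "continuous_on UNIV (\<lambda>t::complex. (s(j := t)) i)"
      by (cases "i = j") (auto intro: continuous_intros)
  qed
  then have "open ((\<lambda>t. s(j := t)) -` T)" using T(1) open_vimage by blast
  moreover have "s j \<in> (\<lambda>t. s(j := t)) -` T" using assms(2) T by auto
  moreover have "s(j := t) \<in> U" if "t \<in> (\<lambda>t. s(j := t)) -` T" for t
    using that assms(2,3) T by (auto simp: Ck_def)
  ultimately show ?thesis by (metis eventually_nhds)
qed

lemma holo_k_cong:
  assumes "admissible k U" "\<And>s. s \<in> U \<Longrightarrow> F s = G s" "holo_k k U G"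
  shows "holo_k k U F"
  unfolding holo_k_def
proof (intro conjI ballI)
  show "continuous_on U F" using assms(2,3) unfolding holo_k_def by (metis continuous_on_cong)
  fix s j assume s: "s \<in> U" and j: "j \<in> {1..k}"
  have ev: "\<forall>\<^sub>F t in nhds (s j). t \<in> UNIV \<longrightarrow> F (s(j := t)) = G (s(j := t))"
    using eventually_line_in_admissible[OF assms(1) s j] assms(2) by (auto elim!: eventually_mono)
  obtain D where "((\<lambda>t. G (s(j := t))) has_field_derivative D) (at (s j))"
    using assms(3) s j unfolding holo_k_def field_differentiable_def by blast
  then have "((\<lambda>t. F (s(j := t))) has_field_derivative D) (at (s j))"
    using has_field_derivative_cong_ev[OF refl ev refl refl] by simp
  then show "(\<lambda>t. F (s(j := t))) field_differentiable at (s j)"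
    unfolding field_differentiable_def by blast
qed

lemma admissible_Ck_diff_DiscSet:
  assumes "k \<ge> 1"
  shows "admissible k (Ck k - DiscSet k)"
  unfolding admissible_def
proof
  have "continuous_on UNIV (\<lambda>s. Determinant.det (to_mat k (PderA k s)))"
    using separately_entire_det_to_mat[of "PderA k", OF separately_entire_PderA]
    unfolding separately_entire_def by blast
  then have "open {s. Determinant.det (to_mat k (PderA k s)) \<noteq> 0}"
    by (intro open_Collect_neq) (auto intro: continuous_intros)
  then show "openin (top_of_set (Ck k)) (Ck k - DiscSet k)"
    unfolding Ck_diff_DiscSet[OF assms] minvertible_iff_det openin_open by blast
qed simp

lemma minvertible_if_admissible:
  assumes "k \<ge> 1" "admissible k U" "s \<in> U"
  shows "minvertible k (PderA k s)"
  using assms Ck_diff_DiscSet[OF assms(1)] unfolding admissible_def by auto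

lemma holo_k_minv_PderA:
  assumes "k \<ge> 1" "admissible k U" "i \<in> {1..k}" "j \<in> {1..k}"
  shows "holo_k k U (\<lambda>s. minv k (PderA k s) i j)"
proof (rule holo_k_cong[OF assms(2)])
  show "minv k (PderA k s) i j = adj_mat (to_mat k (PderA k s)) $$ (i - 1, j - 1) / Determinant.det (to_mat k (PderA k s))"
    if "s \<in> U" for s
    using minv_eq_adj_mat[OF minvertible_if_admissible[OF assms(1,2) that] assms(3,4)] .
  show "holo_k k U (\<lambda>s. adj_mat (to_mat k (PderA k s)) $$ (i - 1, j - 1) / Determinant.det (to_mat k (PderA k s)))"
  proof (rule holo_k_divide)
    show "holo_k k U (\<lambda>s. adj_mat (to_mat k (PderA k s)) $$ (i - 1, j - 1))"
      using assms(3,4)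
      by (intro holo_k_if_separately_entire separately_entire_adj_mat_to_mat[of "PderA k"] separately_entire_PderA) auto
    show "holo_k k U (\<lambda>s. Determinant.det (to_mat k (PderA k s)))"
      by (intro holo_k_if_separately_entire separately_entire_det_to_mat[of "PderA k"] separately_entire_PderA)
    show "\<And>s. s \<in> U \<Longrightarrow> Determinant.det (to_mat k (PderA k s)) \<noteq> 0"
      using minvertible_if_admissible[OF assms(1,2)] minvertible_iff_det by blast
  qed
qed

section \<open>Derivatives along coordinate lines\<close>

lemma pdiff_eqI: "((\<lambda>t. F (s(h := t))) has_field_derivative D) (at (s h)) \<Longrightarrow> pdiff h F s = D"
  unfolding pdiff_def by (rule DERIV_imp_deriv)

lemma has_field_derivative_pdiff:
  "holo_k k U F \<Longrightarrow> s \<in> U \<Longrightarrow> h \<in> {1..k} \<Longrightarrow>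
    ((\<lambda>t. F (s(h := t))) has_field_derivative pdiff h F s) (at (s h))"
  unfolding holo_k_def pdiff_def by (simp add: DERIV_deriv_iff_field_differentiable)

lemma pdiff_cong_admissible:
  assumes "admissible k U" "s \<in> U" "h \<in> {1..k}" "\<And>t. t \<in> U \<Longrightarrow> F t = G t"
  shows "pdiff h F s = pdiff h G s"
  unfolding pdiff_def
  by (rule deriv_cong_ev[OF _ refl])
     (use eventually_line_in_admissible[OF assms(1-3)] assms(4) in \<open>auto elim!: eventually_mono\<close>)

lemma has_field_derivative_mvec_line:
  assumes "\<And>l. l \<in> {1..k} \<Longrightarrow> ((\<lambda>t. M (s(h := t)) i l) has_field_derivative dM i l) (at (s h))"
    and "\<And>l. l \<in> {1..k} \<Longrightarrow> ((\<lambda>t. v (s(h := t)) l) has_field_derivative dv l) (at (s h))"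
  shows "((\<lambda>t. mvec k (M (s(h := t))) (v (s(h := t))) i) has_field_derivative
           mvec k dM (v s) i + mvec k (M s) dv i) (at (s h))"
proof -
  have "((\<lambda>t. \<Sum>l\<in>{1..k}. M (s(h := t)) i l * v (s(h := t)) l) has_field_derivative
      (\<Sum>l\<in>{1..k}. dM i l * v (s(h := s h)) l + dv l * M (s(h := s h)) i l)) (at (s h))"
    by (intro DERIV_sum DERIV_mult assms) auto
  then show ?thesis unfolding mvec_def by (simp add: sum.distrib mult.commute)
qed

definition dAcomp :: "nat \<Rightarrow> nat \<Rightarrow> nat \<Rightarrow> nat \<Rightarrow> complex" where
  "dAcomp k h i j = (if i = k \<and> 1 \<le> j \<and> j \<le> k \<and> k + 1 - j = h then (-1)^(k-j) else 0)"

fun dmpow :: "nat \<Rightarrow> nat \<Rightarrow> (nat \<Rightarrow> complex) \<Rightarrow> nat \<Rightarrow> nat \<Rightarrow> nat \<Rightarrow> complex" where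
  "dmpow k h s 0 = (\<lambda>i j. 0)"
| "dmpow k h s (Suc n) = (\<lambda>i j. mmul k (dAcomp k h) (mpow k (Acomp k s) n) i j + mmul k (Acomp k s) (dmpow k h s n) i j)"

definition dPderA :: "nat \<Rightarrow> nat \<Rightarrow> (nat \<Rightarrow> complex) \<Rightarrow> nat \<Rightarrow> nat \<Rightarrow> complex" where
  "dPderA k h s i j = (\<Sum>m<k. (-1)^m * of_nat (k - m) *
     ((if m = h then mpow k (Acomp k s) (k - m - 1) i j else 0) + scoef s m * dmpow k h s (k - m - 1) i j))"

lemma has_field_derivative_Acomp_line:
  assumes "h \<in> {1..k}"
  shows "((\<lambda>t. Acomp k (s(h := t)) i j) has_field_derivative dAcomp k h i j) (at t0)"
proof (cases "(i = k \<and> 1 \<le> j \<and> j \<le> k) \<and> k + 1 - j = h")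
  case True
  then have "(\<lambda>t. Acomp k (s(h := t)) i j) = (\<lambda>t. (-1)^(k-j) * t)" "dAcomp k h i j = (-1)^(k-j)"
    using assms by (auto simp: Acomp_def dAcomp_def fun_eq_iff)
  then show ?thesis by (auto intro!: derivative_eq_intros)
next
  case False
  then have "(\<lambda>t. Acomp k (s(h := t)) i j) = (\<lambda>t. Acomp k s i j)" "dAcomp k h i j = 0"
    using assms by (auto simp: Acomp_def dAcomp_def fun_eq_iff)
  then show ?thesis by simp
qed

lemma has_field_derivative_mpow_line:
  assumes "h \<in> {1..k}"
  shows "((\<lambda>t. mpow k (Acomp k (s(h := t))) n i j) has_field_derivative dmpow k h s n i j) (at (s h))"
proof (induction n arbitrary: i j)
  case (Suc n)
  have "((\<lambda>t. \<Sum>l\<in>{1..k}. Acomp k (s(h := t)) i l * mpow k (Acomp k (s(h := t))) n l j) has_field_derivative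
     (\<Sum>l\<in>{1..k}. dAcomp k h i l * mpow k (Acomp k (s(h := s h))) n l j + dmpow k h s n l j * Acomp k (s(h := s h)) i l))
     (at (s h))"
    by (intro DERIV_sum DERIV_mult has_field_derivative_Acomp_line[OF assms] Suc.IH)
  then show ?case by (simp add: mmul_def sum.distrib mult.commute fun_upd_def)
qed simp

lemma has_field_derivative_scoef_line:
  assumes "h \<in> {1..k}"
  shows "((\<lambda>t. scoef (s(h := t)) m) has_field_derivative (if m = h then 1 else 0)) (at t0)"
proof -
  have "(\<lambda>t. scoef (s(h := t)) m) = (if m = h then (\<lambda>t. t) else (\<lambda>t. scoef s m))"
    using assms by (auto simp: scoef_def)
  then show ?thesis by simp
qed

lemma has_field_derivative_PderA_line:
  assumes "h \<in> {1..k}"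
  shows "((\<lambda>t. PderA k (s(h := t)) i j) has_field_derivative dPderA k h s i j) (at (s h))"
proof -
  have "((\<lambda>t. \<Sum>m<k. (-1)^m * of_nat (k - m) * scoef (s(h := t)) m * mpow k (Acomp k (s(h := t))) (k - m - 1) i j)
     has_field_derivative (\<Sum>m<k. (-1)^m * of_nat (k - m) * (if m = h then 1 else 0) * mpow k (Acomp k (s(h := s h))) (k - m - 1) i j
        + dmpow k h s (k - m - 1) i j * ((-1)^m * of_nat (k - m) * scoef (s(h := s h)) m))) (at (s h))"
    by (intro DERIV_sum DERIV_mult DERIV_cmult has_field_derivative_scoef_line[OF assms]
        has_field_derivative_mpow_line[OF assms])
  then show ?thesis unfolding PderA_def dPderA_def
    by (rule DERIV_cong) (intro sum.cong refl, simp add: algebra_simps)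
qed

text \<open>Both \<open>\<partial>A/\<partial>s\<^sub>h\<close> and \<open>\<partial>A/\<partial>s\<^sub>k\<close> are supported on the last row, and multiplying the latter from the
  right by \<open>A(s)\<^sup>k\<^sup>-\<^sup>h\<close> moves its only nonzero entry from column \<open>1\<close> to column \<open>k + 1 - h\<close>.\<close>

lemma dAcomp_shift:
  assumes "h \<in> {1..k}" "l \<in> {1..k}"
  shows "dAcomp k h i l = (-1)^(h+k) * mmul k (dAcomp k k) (mpow k (Acomp k s) (k - h)) i l"
proof -
  let ?P = "mpow k (Acomp k s) (k - h)"
  have one: "1 \<in> {1..k}" using assms by auto
  have "mmul k (dAcomp k k) ?P i l = (\<Sum>m\<in>{1..k}. if m = 1 then (if i = k then (-1)^(k-1) * ?P 1 l else 0) else 0)"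
    unfolding mmul_def by (intro sum.cong refl) (auto simp: dAcomp_def)
  also have "\<dots> = (if i = k then (-1)^(k-1) * ?P 1 l else 0)" using one by simp
  also have "?P 1 l = (if l = k + 1 - h then 1 else 0)"
    using assms mpow_Acomp_row[OF one, of "k - h" l] by auto
  finally have "mmul k (dAcomp k k) ?P i l = (if i = k \<and> l = k + 1 - h then (-1)^(k-1) else 0)"
    by simp
  moreover have "(-1::complex)^(h+k) * (-1)^(k-1) = (-1)^(k-l)" if "l = k + 1 - h"
  proof -
    have e: "h + k + (k - 1) = (k - l) + 2 * k" using assms that by auto
    have "(-1::complex)^(h+k) * (-1)^(k-1) = (-1)^(h + k + (k - 1))" by (simp add: power_add)
    also have "\<dots> = (-1)^(k-l)" unfolding e by (simp add: power_add power_mult)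
    finally show ?thesis .
  qed
  ultimately show ?thesis using assms by (auto simp: dAcomp_def)
qed

lemma dmpow_shift:
  assumes "h \<in> {1..k}"
  shows "dmpow k h s n i j = (-1)^(h+k) * mmul k (dmpow k k s n) (mpow k (Acomp k s) (k - h)) i j"
proof (induction n arbitrary: i j)
  case (Suc n)
  let ?A = "Acomp k s" and ?P = "mpow k (Acomp k s) (k - h)" and ?c = "(-1::complex)^(h+k)"
  have "mmul k (dAcomp k h) (mpow k ?A n) i j = mmul k (\<lambda>i l. ?c * mmul k (dAcomp k k) ?P i l) (mpow k ?A n) i j"
    by (rule mmul_cong) (auto simp: dAcomp_shift[OF assms])
  also have "\<dots> = ?c * mmul k (dAcomp k k) (mmul k ?P (mpow k ?A n)) i j"
    by (simp add: mmul_scale_left mmul_assoc)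
  also have "mmul k (dAcomp k k) (mmul k ?P (mpow k ?A n)) i j = mmul k (dAcomp k k) (mmul k (mpow k ?A n) ?P) i j"
    by (rule mmul_cong) (auto simp: mpow_commute)
  finally have first: "mmul k (dAcomp k h) (mpow k ?A n) i j = ?c * mmul k (mmul k (dAcomp k k) (mpow k ?A n)) ?P i j"
    by (simp add: mmul_assoc)
  have "dmpow k h s n = (\<lambda>i j. ?c * mmul k (dmpow k k s n) ?P i j)" using Suc.IH by (intro ext)
  then have second: "mmul k ?A (dmpow k h s n) i j = ?c * mmul k (mmul k ?A (dmpow k k s n)) ?P i j"
    by (simp add: mmul_scale_right mmul_assoc)
  show ?case using first second by (simp add: mmul_add_left algebra_simps)
qed (simp add: mmul_def)

text \<open>The derivative of \<open>P'\<^sub>s(A(s))\<close> in \<open>s\<^sub>h\<close> differs from the shifted derivative in \<open>s\<^sub>k\<close> by the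
  contribution of the explicit coefficient \<open>s\<^sub>h\<close>; this is the origin of the extra term in (@@).\<close>

lemma dPderA_shift:
  assumes "h \<in> {1..k-1}"
  shows "(-1)^(k+h) * dPderA k h s i j = mmul k (dPderA k k s) (mpow k (Acomp k s) (k - h)) i j
      + (-1)^k * of_nat (k - h) * mpow k (Acomp k s) (k - h - 1) i j"
proof -
  let ?P = "mpow k (Acomp k s) (k - h)" and ?a = "\<lambda>m. (-1)^m * of_nat (k - m) * scoef s m"
  have h: "h \<in> {1..k}" "h < k" using assms by auto
  have "dPderA k h s i j = (\<Sum>m<k. if m = h then (-1)^m * of_nat (k - m) * mpow k (Acomp k s) (k - m - 1) i j else 0)
      + (\<Sum>m<k. ?a m * dmpow k h s (k - m - 1) i j)"
    unfolding dPderA_def sum.distrib[symmetric] by (intro sum.cong refl) (auto simp: algebra_simps)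
  then have "dPderA k h s i j = (-1)^h * of_nat (k - h) * mpow k (Acomp k s) (k - h - 1) i j
      + (\<Sum>m<k. ?a m * dmpow k h s (k - m - 1) i j)"
    using h(2) by simp
  moreover have "(-1)^(k+h) * (\<Sum>m<k. ?a m * dmpow k h s (k - m - 1) i j)
      = (\<Sum>m<k. ?a m * mmul k (dmpow k k s (k - m - 1)) ?P i j)"
    unfolding sum_distrib_left by (intro sum.cong refl) (simp add: dmpow_shift[OF h(1)] power_add)
  moreover have "(\<Sum>m<k. ?a m * mmul k (dmpow k k s (k - m - 1)) ?P i j) = mmul k (dPderA k k s) ?P i j"
    unfolding mmul_sum_left[symmetric] by (rule mmul_cong) (auto simp: dPderA_def algebra_simps)
  ultimately show ?thesis by (simp add: algebra_simps power_add)
qed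

section \<open>The systems (@) and (@@)\<close>

definition defect :: "nat \<Rightarrow> nat \<Rightarrow> ((nat \<Rightarrow> complex) \<Rightarrow> nat \<Rightarrow> complex) \<Rightarrow> (nat \<Rightarrow> complex) \<Rightarrow> nat \<Rightarrow> complex" where
  "defect k h \<Phi> s i = (-1)^(k+h) * pdiff h (\<lambda>t. \<Phi> t i) s - pdiff k (\<lambda>t. mvec k (mpow k (Acomp k t) (k - h)) (\<Phi> t) i) s"

lemma sol_A_iff:
  "sol_A k U \<Phi> \<longleftrightarrow> admissible k U \<and> (\<forall>i\<in>{1..k}. holo_k k U (\<lambda>s. \<Phi> s i)) \<and>
     (\<forall>s\<in>U. \<forall>h\<in>{1..k-1}. \<forall>i\<in>{1..k}. defect k h \<Phi> s i = 0)"
  unfolding sol_A_def defect_def by simp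

lemma sol_AA_iff:
  "sol_AA k U \<Psi> \<longleftrightarrow> admissible k U \<and> (\<forall>i\<in>{1..k}. holo_k k U (\<lambda>s. \<Psi> s i)) \<and>
     (\<forall>s\<in>U. \<forall>h\<in>{1..k-1}. \<forall>i\<in>{1..k}. defect k h \<Psi> s i =
        (-1)^k * of_nat (k - h) * mvec k (mmul k (mpow k (Acomp k s) (k - h - 1)) (minv k (PderA k s))) (\<Psi> s) i)"
  unfolding sol_AA_def defect_def by (simp add: algebra_simps)

lemma defect_cong:
  assumes "admissible k U" "s \<in> U" "h \<in> {1..k}" "i \<in> {1..k}"
    and "\<And>t l. t \<in> U \<Longrightarrow> l \<in> {1..k} \<Longrightarrow> \<Phi> t l = \<Phi>' t l"
  shows "defect k h \<Phi> s i = defect k h \<Phi>' s i"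
proof -
  have k: "k \<in> {1..k}" using assms(3) by auto
  have "pdiff h (\<lambda>t. \<Phi> t i) s = pdiff h (\<lambda>t. \<Phi>' t i) s"
    by (rule pdiff_cong_admissible[OF assms(1-3)]) (rule assms(5)[OF _ assms(4)])
  moreover have "mvec k (mpow k (Acomp k t) (k - h)) (\<Phi> t) i = mvec k (mpow k (Acomp k t) (k - h)) (\<Phi>' t) i"
    if "t \<in> U" for t
    using assms(5)[OF that] by (intro mvec_cong) simp_all
  then have "pdiff k (\<lambda>t. mvec k (mpow k (Acomp k t) (k - h)) (\<Phi> t) i) s
      = pdiff k (\<lambda>t. mvec k (mpow k (Acomp k t) (k - h)) (\<Phi>' t) i) s"
    by (rule pdiff_cong_admissible[OF assms(1,2) k])
  ultimately show ?thesis unfolding defect_def by simp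
qed

lemma defect_mvec:
  assumes h: "h \<in> {1..k-1}" and i: "i \<in> {1..k}" and s: "s \<in> U"
    and holo: "\<And>l. l \<in> {1..k} \<Longrightarrow> holo_k k U (\<lambda>t. \<Phi> t l)"
    and comm: "\<And>t l. l \<in> {1..k} \<Longrightarrow>
       mmul k (mpow k (Acomp k t) (k - h)) (M t) i l = mmul k (M t) (mpow k (Acomp k t) (k - h)) i l"
    and dM: "\<And>j l. j \<in> {h, k} \<Longrightarrow> l \<in> {1..k} \<Longrightarrow>
       ((\<lambda>x. M (s(j := x)) i l) has_field_derivative dM j i l) (at (s j))"
  shows "defect k h (\<lambda>t. mvec k (M t) (\<Phi> t)) s i = mvec k (M s) (defect k h \<Phi> s) i
      + mvec k (\<lambda>i l. (-1)^(k+h) * dM h i l - mmul k (dM k) (mpow k (Acomp k s) (k - h)) i l) (\<Phi> s) i"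
proof -
  let ?P = "\<lambda>t. mpow k (Acomp k t) (k - h)"
  define v where "v t l = mvec k (?P t) (\<Phi> t) l" for t l
  have hk: "h \<in> {1..k}" "k \<in> {1..k}" using h by auto
  have holo_v: "holo_k k U (\<lambda>t. v t l)" if "l \<in> {1..k}" for l
    unfolding v_def
    by (rule holo_k_mvec) (use holo in \<open>auto intro: holo_k_if_separately_entire separately_entire_mpow\<close>)
  let ?c = "(-1::complex)^(k+h)" and ?dh = "\<lambda>l. pdiff h (\<lambda>t. \<Phi> t l) s" and ?dv = "\<lambda>l. pdiff k (\<lambda>t. v t l) s"
  have "pdiff h (\<lambda>t. mvec k (M t) (\<Phi> t) i) s = mvec k (dM h) (\<Phi> s) i + mvec k (M s) ?dh i"
    using holo by (intro pdiff_eqI has_field_derivative_mvec_line dM has_field_derivative_pdiff[OF _ s hk(1)]) auto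
  moreover have "(\<lambda>t. mvec k (?P t) (\<lambda>l. mvec k (M t) (\<Phi> t) l) i) = (\<lambda>t. mvec k (M t) (v t) i)"
    unfolding v_def mvec_mmul[symmetric] using comm by (intro ext mvec_cong) auto
  moreover have "pdiff k (\<lambda>t. mvec k (M t) (v t) i) s = mvec k (dM k) (v s) i + mvec k (M s) ?dv i"
    using holo_v by (intro pdiff_eqI has_field_derivative_mvec_line dM has_field_derivative_pdiff[OF _ s hk(2)]) auto
  ultimately have lhs: "defect k h (\<lambda>t. mvec k (M t) (\<Phi> t)) s i
      = ?c * (mvec k (dM h) (\<Phi> s) i + mvec k (M s) ?dh i) - (mvec k (dM k) (v s) i + mvec k (M s) ?dv i)"
    unfolding defect_def by simp
  have "defect k h \<Phi> s = (\<lambda>l. ?c * ?dh l - ?dv l)"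
    by (simp add: defect_def v_def fun_eq_iff)
  then have rhs1: "mvec k (M s) (defect k h \<Phi> s) i = ?c * mvec k (M s) ?dh i - mvec k (M s) ?dv i"
    by (simp add: mvec_diff_right mvec_scale_right)
  have rhs2: "mvec k (\<lambda>i l. ?c * dM h i l - mmul k (dM k) (?P s) i l) (\<Phi> s) i
      = ?c * mvec k (dM h) (\<Phi> s) i - mvec k (dM k) (v s) i"
    by (simp add: mvec_diff_left mvec_scale_left mvec_mmul v_def[abs_def])
  show ?thesis unfolding lhs rhs1 rhs2 by (simp add: algebra_simps)
qed

lemma defect_Acomp_mvec:
  assumes "h \<in> {1..k-1}" "i \<in> {1..k}" "s \<in> U" "\<And>l. l \<in> {1..k} \<Longrightarrow> holo_k k U (\<lambda>t. \<Phi> t l)"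
  shows "defect k h (\<lambda>t. mvec k (Acomp k t) (\<Phi> t)) s i = mvec k (Acomp k s) (defect k h \<Phi> s) i"
proof -
  have "h \<in> {1..k}" "k \<in> {1..k}" using assms(1) by auto
  then have "defect k h (\<lambda>t. mvec k (Acomp k t) (\<Phi> t)) s i = mvec k (Acomp k s) (defect k h \<Phi> s) i
      + mvec k (\<lambda>i l. (-1)^(k+h) * dAcomp k h i l - mmul k (dAcomp k k) (mpow k (Acomp k s) (k - h)) i l) (\<Phi> s) i"
    using assms mpow_commute_base
    by (intro defect_mvec[where dM = "dAcomp k"] has_field_derivative_Acomp_line) auto
  also have "mvec k (\<lambda>i l. (-1)^(k+h) * dAcomp k h i l - mmul k (dAcomp k k) (mpow k (Acomp k s) (k - h)) i l) (\<Phi> s) i = 0"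
    unfolding mvec_def using \<open>h \<in> {1..k}\<close> by (simp add: dAcomp_shift[of h k _ _ s] add.commute)
  finally show ?thesis by simp
qed

lemma defect_PderA_mvec:
  assumes "h \<in> {1..k-1}" "i \<in> {1..k}" "s \<in> U" "\<And>l. l \<in> {1..k} \<Longrightarrow> holo_k k U (\<lambda>t. \<Phi> t l)"
  shows "defect k h (\<lambda>t. mvec k (PderA k t) (\<Phi> t)) s i = mvec k (PderA k s) (defect k h \<Phi> s) i
      + (-1)^k * of_nat (k - h) * mvec k (mpow k (Acomp k s) (k - h - 1)) (\<Phi> s) i"
proof -
  have "h \<in> {1..k}" "k \<in> {1..k}" using assms(1) by auto
  then have "defect k h (\<lambda>t. mvec k (PderA k t) (\<Phi> t)) s i = mvec k (PderA k s) (defect k h \<Phi> s) i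
      + mvec k (\<lambda>i l. (-1)^(k+h) * dPderA k h s i l - mmul k (dPderA k k s) (mpow k (Acomp k s) (k - h)) i l) (\<Phi> s) i"
    using assms PderA_commute_mpow
    by (intro defect_mvec[where dM = "\<lambda>j. dPderA k j s"] has_field_derivative_PderA_line) auto
  also have "(\<lambda>i l. (-1)^(k+h) * dPderA k h s i l - mmul k (dPderA k k s) (mpow k (Acomp k s) (k - h)) i l)
      = (\<lambda>i l. (-1)^k * of_nat (k - h) * mpow k (Acomp k s) (k - h - 1) i l)"
    using dPderA_shift[OF assms(1)] by (intro ext) (simp add: algebra_simps)
  finally show ?thesis by (simp add: mvec_scale_left)
qed

lemma sol_AA_PderA_mvec:
  assumes "sol_A k U \<Phi>"
  shows "sol_AA k U (\<lambda>s. mvec k (PderA k s) (\<Phi> s))"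
proof -
  have U: "admissible k U" and holo: "\<And>l. l \<in> {1..k} \<Longrightarrow> holo_k k U (\<lambda>s. \<Phi> s l)"
    and sol: "\<And>s h l. s \<in> U \<Longrightarrow> h \<in> {1..k-1} \<Longrightarrow> l \<in> {1..k} \<Longrightarrow> defect k h \<Phi> s l = 0"
    using assms unfolding sol_A_iff by auto
  show ?thesis unfolding sol_AA_iff
  proof (intro conjI ballI U)
    fix i assume "i \<in> {1..k}"
    then show "holo_k k U (\<lambda>s. mvec k (PderA k s) (\<Phi> s) i)"
      using holo by (intro holo_k_mvec holo_k_if_separately_entire[OF separately_entire_PderA]) auto
  next
    fix s h i assume s: "s \<in> U" and h: "h \<in> {1..k-1}" and i: "i \<in> {1..k}"
    let ?P' = "mpow k (Acomp k s) (k - h - 1)" and ?B = "PderA k s"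
    have inv: "minvertible k ?B" using minvertible_if_admissible[OF _ U s] i by simp
    have "defect k h (\<lambda>t. mvec k (PderA k t) (\<Phi> t)) s i = (-1)^k * of_nat (k - h) * mvec k ?P' (\<Phi> s) i"
      using defect_PderA_mvec[OF h i s holo] mvec_eq_0I[of k "defect k h \<Phi> s"] sol[OF s h] by simp
    also have "mvec k ?P' (\<Phi> s) i = mvec k (mmul k ?P' (minv k ?B)) (mvec k ?B (\<Phi> s)) i"
      unfolding mvec_mmul using mvec_minv_cancel_left[OF inv] by (intro mvec_cong) auto
    finally show "defect k h (\<lambda>t. mvec k (PderA k t) (\<Phi> t)) s i
        = (-1)^k * of_nat (k - h) * mvec k (mmul k ?P' (minv k ?B)) (mvec k ?B (\<Phi> s)) i" .
  qed
qed

lemma sol_AA_Acomp_mvec: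
  assumes "sol_AA k U \<Psi>"
  shows "sol_AA k U (\<lambda>s. mvec k (Acomp k s) (\<Psi> s))"
proof -
  have U: "admissible k U" and holo: "\<And>l. l \<in> {1..k} \<Longrightarrow> holo_k k U (\<lambda>s. \<Psi> s l)"
    and sol: "\<And>s h l. s \<in> U \<Longrightarrow> h \<in> {1..k-1} \<Longrightarrow> l \<in> {1..k} \<Longrightarrow> defect k h \<Psi> s l =
        (-1)^k * of_nat (k - h) * mvec k (mmul k (mpow k (Acomp k s) (k - h - 1)) (minv k (PderA k s))) (\<Psi> s) l"
    using assms unfolding sol_AA_iff by auto
  show ?thesis unfolding sol_AA_iff
  proof (intro conjI ballI U)
    fix i assume "i \<in> {1..k}"
    then show "holo_k k U (\<lambda>s. mvec k (Acomp k s) (\<Psi> s) i)"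
      using holo by (intro holo_k_mvec holo_k_if_separately_entire[OF separately_entire_Acomp]) auto
  next
    fix s h i assume s: "s \<in> U" and h: "h \<in> {1..k-1}" and i: "i \<in> {1..k}"
    let ?A = "Acomp k s" and ?Q = "mmul k (mpow k (Acomp k s) (k - h - 1)) (minv k (PderA k s))"
      and ?c = "(-1)^k * of_nat (k - h) :: complex"
    have inv: "minvertible k (PderA k s)" using minvertible_if_admissible[OF _ U s] i by simp
    have comm: "mmul k ?A ?Q i' l = mmul k ?Q ?A i' l" if "i' \<in> {1..k}" "l \<in> {1..k}" for i' l
    proof -
      have "mmul k ?A ?Q i' l = mmul k (mmul k (mpow k ?A (k - h - 1)) ?A) (minv k (PderA k s)) i' l"
        unfolding mmul_assoc[symmetric] by (rule mmul_cong[OF _ refl]) (use mpow_commute_base that(1) in auto)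
      also have "\<dots> = mmul k (mpow k ?A (k - h - 1)) (mmul k (minv k (PderA k s)) ?A) i' l"
        unfolding mmul_assoc
      proof (rule mmul_cong[OF refl])
        fix m assume "m \<in> {1..k}"
        from minv_commute[OF inv PderA_commute_Acomp[symmetric] this that(2)]
        show "mmul k ?A (minv k (PderA k s)) m l = mmul k (minv k (PderA k s)) ?A m l" by (rule sym)
      qed
      finally show ?thesis by (simp add: mmul_assoc)
    qed
    have "defect k h (\<lambda>t. mvec k (Acomp k t) (\<Psi> t)) s i = mvec k ?A (defect k h \<Psi> s) i"
      by (rule defect_Acomp_mvec[OF h i s holo])
    also have "\<dots> = mvec k ?A (\<lambda>l. ?c * mvec k ?Q (\<Psi> s) l) i"
      by (rule mvec_cong[OF refl]) (rule sol[OF s h])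
    also have "\<dots> = ?c * mvec k (mmul k ?A ?Q) (\<Psi> s) i" by (simp add: mvec_scale_right mvec_mmul)
    also have "mvec k (mmul k ?A ?Q) (\<Psi> s) i = mvec k ?Q (mvec k ?A (\<Psi> s)) i"
      unfolding mvec_mmul[symmetric] using comm i by (intro mvec_cong) auto
    finally show "defect k h (\<lambda>t. mvec k (Acomp k t) (\<Psi> t)) s i = ?c * mvec k ?Q (mvec k ?A (\<Psi> s)) i" .
  qed
qed

lemma sol_A_minv_PderA_mvec:
  assumes "sol_AA k U \<Psi>"
  shows "sol_A k U (\<lambda>s. mvec k (minv k (PderA k s)) (\<Psi> s))"
proof -
  have U: "admissible k U" and holo: "\<And>l. l \<in> {1..k} \<Longrightarrow> holo_k k U (\<lambda>s. \<Psi> s l)"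
    and sol: "\<And>s h l. s \<in> U \<Longrightarrow> h \<in> {1..k-1} \<Longrightarrow> l \<in> {1..k} \<Longrightarrow> defect k h \<Psi> s l =
        (-1)^k * of_nat (k - h) * mvec k (mmul k (mpow k (Acomp k s) (k - h - 1)) (minv k (PderA k s))) (\<Psi> s) l"
    using assms unfolding sol_AA_iff by auto
  define \<Phi> where "\<Phi> s = mvec k (minv k (PderA k s)) (\<Psi> s)" for s
  have holo_\<Phi>: "holo_k k U (\<lambda>s. \<Phi> s l)" if "l \<in> {1..k}" for l
    unfolding \<Phi>_def using that holo by (intro holo_k_mvec holo_k_minv_PderA[OF _ U]) auto
  have \<Psi>_eq: "mvec k (PderA k t) (\<Phi> t) l = \<Psi> t l" if "t \<in> U" "l \<in> {1..k}" for t l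
    unfolding \<Phi>_def using mvec_minv_cancel_right[OF minvertible_if_admissible[OF _ U that(1)] that(2)] that(2)
    by simp
  have "defect k h \<Phi> s i = 0" if s: "s \<in> U" and h: "h \<in> {1..k-1}" and i: "i \<in> {1..k}" for s h i
  proof -
    let ?B = "PderA k s"
    have inv: "minvertible k ?B" using minvertible_if_admissible[OF _ U s] i by simp
    have "mvec k ?B (defect k h \<Phi> s) l = 0" if l: "l \<in> {1..k}" for l
    proof -
      have "defect k h \<Psi> s l = defect k h (\<lambda>t. mvec k (PderA k t) (\<Phi> t)) s l"
        using h l \<Psi>_eq by (intro defect_cong[OF U s]) auto
      also have "\<dots> = mvec k ?B (defect k h \<Phi> s) l
          + (-1)^k * of_nat (k - h) * mvec k (mpow k (Acomp k s) (k - h - 1)) (\<Phi> s) l"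
        by (rule defect_PderA_mvec[OF h l s holo_\<Phi>])
      finally show ?thesis using sol[OF s h l] by (simp add: mvec_mmul \<Phi>_def[abs_def])
    qed
    then have "mvec k (minv k ?B) (mvec k ?B (defect k h \<Phi> s)) i = 0" by (rule mvec_eq_0I)
    then show ?thesis using mvec_minv_cancel_left[OF inv i] by simp
  qed
  then show ?thesis unfolding sol_A_iff \<Phi>_def[symmetric] using U holo_\<Phi> by blast
qed

lemma sol_AA_cong:
  assumes "sol_AA k U \<Psi>" "\<And>s i. i \<in> {1..k} \<Longrightarrow> \<Psi>' s i = \<Psi> s i"
  shows "sol_AA k U \<Psi>'"
proof -
  have "(\<lambda>s. \<Psi>' s i) = (\<lambda>s. \<Psi> s i)" if "i \<in> {1..k}" for i
    using assms(2)[OF that] by (intro ext)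
  moreover have "mvec k M (\<Psi>' s) i = mvec k M (\<Psi> s) i" for M s i
    using assms(2) by (intro mvec_cong) auto
  ultimately show ?thesis using assms(1) unfolding sol_AA_def by simp
qed

section \<open>Contour integrals depending on a parameter\<close>

lemma circlepath_in_sphere: "R \<ge> 0 \<Longrightarrow> x \<in> {0..1} \<Longrightarrow> circlepath 0 R x \<in> sphere 0 R"
  using path_image_circlepath_nonneg[of R 0] by (auto simp: path_image_def)

lemma continuous_on_circlepath: "continuous_on S (circlepath z R)"
  unfolding circlepath by (intro continuous_intros)

lemma continuous_on_vector_derivative_circlepath:
  "continuous_on S (\<lambda>x. vector_derivative (circlepath 0 R) (at x))"
  unfolding vector_derivative_circlepath by (intro continuous_intros)

lemma continuous_on_circlepath_param:
  assumes "R \<ge> 0" "continuous_on (S \<times> sphere 0 R) (\<lambda>(s, \<zeta>). G s \<zeta>)"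
  shows "continuous_on (S \<times> cbox 0 1)
           (\<lambda>(s, x). G s (circlepath 0 R x) * vector_derivative (circlepath 0 R) (at x))"
proof -
  have "continuous_on (S \<times> cbox 0 1) (\<lambda>p. circlepath 0 R (snd p))"
    by (rule continuous_on_compose2[OF continuous_on_circlepath continuous_on_snd[OF continuous_on_id]]) auto
  then have pair: "continuous_on (S \<times> cbox 0 1) (\<lambda>p. (fst p, circlepath 0 R (snd p)))"
    by (intro continuous_on_Pair continuous_on_fst continuous_on_id)
  have "(\<lambda>p. (fst p, circlepath 0 R (snd p))) ` (S \<times> cbox 0 1) \<subseteq> S \<times> sphere 0 R"
    using circlepath_in_sphere[OF assms(1)] by (auto simp: cbox_interval)
  from continuous_on_compose2[OF assms(2) pair this]
  have "continuous_on (S \<times> cbox 0 1) (\<lambda>p. G (fst p) (circlepath 0 R (snd p)))" by simp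
  moreover have "continuous_on (S \<times> cbox 0 1) (\<lambda>p. vector_derivative (circlepath 0 R) (at (snd p)))"
    by (rule continuous_on_compose2[OF continuous_on_vector_derivative_circlepath
          continuous_on_snd[OF continuous_on_id]]) auto
  ultimately show ?thesis unfolding case_prod_unfold by (rule continuous_on_mult)
qed

lemma continuous_on_contour_integral_circlepath:
  assumes "R \<ge> 0" "continuous_on (S \<times> sphere 0 R) (\<lambda>(s, \<zeta>). G s \<zeta>)"
  shows "continuous_on S (\<lambda>s. contour_integral (circlepath 0 R) (G s))"
  unfolding contour_integral_integral
  using integral_continuous_on_param[OF continuous_on_circlepath_param[OF assms]] by (simp add: cbox_interval)

lemma has_field_derivative_contour_integral_circlepath:
  assumes "R \<ge> 0" "open U" "convex U" "t0 \<in> U"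
    and deriv: "\<And>t \<zeta>. t \<in> U \<Longrightarrow> \<zeta> \<in> sphere 0 R \<Longrightarrow> ((\<lambda>t. G t \<zeta>) has_field_derivative G' t \<zeta>) (at t)"
    and cont: "continuous_on (U \<times> sphere 0 R) (\<lambda>(t, \<zeta>). G t \<zeta>)"
    and cont': "continuous_on (U \<times> sphere 0 R) (\<lambda>(t, \<zeta>). G' t \<zeta>)"
  shows "((\<lambda>t. contour_integral (circlepath 0 R) (G t)) has_field_derivative
           contour_integral (circlepath 0 R) (G' t0)) (at t0)"
proof -
  let ?\<gamma> = "circlepath 0 R" and ?\<gamma>' = "\<lambda>x. vector_derivative (circlepath 0 R) (at x)"
  have "((\<lambda>t. integral (cbox 0 1) (\<lambda>x. G t (?\<gamma> x) * ?\<gamma>' x)) has_field_derivative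
      integral (cbox 0 1) (\<lambda>x. G' t0 (?\<gamma> x) * ?\<gamma>' x)) (at t0 within U)"
  proof (rule leibniz_rule_field_derivative[OF _ _ continuous_on_circlepath_param[OF assms(1) cont'] assms(4,3)])
    fix t x assume tx: "t \<in> U" "x \<in> cbox (0::real) 1"
    then have "((\<lambda>t. G t (?\<gamma> x)) has_field_derivative G' t (?\<gamma> x)) (at t)"
      using circlepath_in_sphere[OF assms(1)] by (intro deriv) (auto simp: cbox_interval)
    then show "((\<lambda>t. G t (?\<gamma> x) * ?\<gamma>' x) has_field_derivative G' t (?\<gamma> x) * ?\<gamma>' x) (at t within U)"
      by (rule DERIV_cmult_right[OF has_field_derivative_at_within])
  next
    fix t assume "t \<in> U"
    have "continuous_on ({t} \<times> sphere 0 R) (\<lambda>(t, \<zeta>). G t \<zeta>)"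
      by (rule continuous_on_subset[OF cont]) (use \<open>t \<in> U\<close> in blast)
    then have c: "continuous_on ({t} \<times> cbox 0 1) (\<lambda>(t, x). G t (?\<gamma> x) * ?\<gamma>' x)"
      by (rule continuous_on_circlepath_param[OF assms(1)])
    have "continuous_on (cbox 0 1) (\<lambda>x. (\<lambda>(t, x). G t (?\<gamma> x) * ?\<gamma>' x) (t, x))"
      by (rule continuous_on_compose2[OF c]) (auto intro!: continuous_intros)
    then have "continuous_on (cbox 0 1) (\<lambda>x. G t (?\<gamma> x) * ?\<gamma>' x)" by simp
    then show "(\<lambda>x. G t (?\<gamma> x) * ?\<gamma>' x) integrable_on cbox 0 1" by (rule integrable_continuous)
  qed
  then show ?thesis
    unfolding contour_integral_integral using at_within_open[OF assms(4,2)] by (simp add: cbox_interval)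
qed

section \<open>The solutions \<open>\<Psi>\<^sub>f\<close>\<close>

lemma continuous_on_coordinate: "continuous_on S (\<lambda>x. x i)"
  by (rule continuous_on_subset[OF continuous_on_product_coordinates]) simp

definition root_radius :: "nat \<Rightarrow> (nat \<Rightarrow> complex) \<Rightarrow> real" where
  "root_radius k s = 1 + (\<Sum>h\<in>{1..k}. cmod (s h))"

lemma root_radius_ge_1: "root_radius k s \<ge> 1"
  unfolding root_radius_def by (simp add: sum_nonneg)

lemma norm_root_less_root_radius:
  assumes "poly (Ppoly k s) z = 0"
  shows "cmod z < root_radius k s"
proof (cases "cmod z < 1")
  case False
  let ?S = "\<Sum>h\<in>{1..k}. cmod (s h)"
  obtain k' where k: "k = Suc k'"
    using assms by (cases k) (auto simp: poly_Ppoly_split)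
  have "cmod z ^ k = cmod (\<Sum>h=1..k. (-1)^h * s h * z^(k-h))"
    using assms unfolding poly_Ppoly_split by (metis add_eq_0_iff norm_minus_cancel norm_power)
  also have "\<dots> \<le> (\<Sum>h=1..k. cmod (s h) * cmod z ^ (k-h))"
    by (rule order_trans[OF norm_sum]) (simp add: norm_mult norm_power)
  also have "\<dots> \<le> (\<Sum>h=1..k. cmod (s h) * cmod z ^ k')"
    using False k by (intro sum_mono mult_left_mono power_increasing) auto
  also have "\<dots> = ?S * cmod z ^ k'" by (simp add: sum_distrib_right)
  finally have "cmod z * cmod z ^ k' \<le> ?S * cmod z ^ k'" by (simp add: k)
  moreover have "cmod z ^ k' > 0" using False by (intro zero_less_power) linarith
  ultimately have "cmod z \<le> ?S" by simp
  then show ?thesis unfolding root_radius_def by linarith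
qed (use root_radius_ge_1[of k s] in linarith)

lemma poly_Ppoly_fun_upd:
  assumes "h \<in> {1..k}"
  shows "poly (Ppoly k (s(h := t))) \<zeta> = poly (Ppoly k s) \<zeta> + (t - s h) * ((-1)^h * \<zeta>^(k-h))"
proof -
  have "poly (Ppoly k (s(h := t))) \<zeta> = (\<Sum>m\<le>k. (-1)^m * scoef s m * \<zeta>^(k-m)
      + (if m = h then (t - s h) * ((-1)^h * \<zeta>^(k-h)) else 0))"
    unfolding poly_Ppoly by (intro sum.cong refl) (use assms in \<open>auto simp: scoef_def algebra_simps\<close>)
  also have "\<dots> = poly (Ppoly k s) \<zeta> + (t - s h) * ((-1)^h * \<zeta>^(k-h))"
    using assms by (simp add: sum.distrib poly_Ppoly)
  finally show ?thesis .
qed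

lemma root_radius_fun_upd_less:
  assumes "h \<in> {1..k}" "cmod (t - s h) < 1"
  shows "root_radius k (s(h := t)) < root_radius k s + 1"
proof -
  have "root_radius k (s(h := t)) \<le> 1 + (\<Sum>m\<in>{1..k}. cmod (s m) + (if m = h then cmod (t - s h) else 0))"
    unfolding root_radius_def
    by (intro add_left_mono sum_mono) (auto intro: order_trans[OF _ norm_triangle_ineq[of "s h" "t - s h", simplified]])
  also have "\<dots> = root_radius k s + cmod (t - s h)" using assms(1) by (simp add: sum.distrib root_radius_def)
  finally show ?thesis using assms(2) by simp
qed

lemma continuous_on_root_radius: "continuous_on S (root_radius k)"
  unfolding root_radius_def[abs_def] by (intro continuous_intros continuous_on_coordinate)

lemma continuous_on_poly_Ppoly: "continuous_on S (\<lambda>p. poly (Ppoly k (fst p)) (snd p))"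
  unfolding poly_Ppoly_split
  by (intro continuous_intros continuous_on_compose2[OF continuous_on_coordinate continuous_on_fst[OF continuous_on_id]])
     auto

lemma poly_Ppoly_nonzero_on_sphere:
  assumes "root_radius k s \<le> R" "cmod \<zeta> = R"
  shows "poly (Ppoly k s) \<zeta> \<noteq> 0"
  using norm_root_less_root_radius[of k s \<zeta>] assms by auto

lemma poly_Ppoly_fun_upd_nonzero:
  assumes "h \<in> {1..k}" "t \<in> ball (s h) 1" "cmod \<zeta> = root_radius k s + 1"
  shows "poly (Ppoly k (s(h := t))) \<zeta> \<noteq> 0"
proof (rule poly_Ppoly_nonzero_on_sphere)
  show "root_radius k (s(h := t)) \<le> root_radius k s + 1"
    using assms(2) by (intro less_imp_le root_radius_fun_upd_less[OF assms(1)]) (auto simp: dist_norm norm_minus_commute)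
qed (rule assms(3))

definition P_integral :: "nat \<Rightarrow> (nat \<Rightarrow> complex) \<Rightarrow> real \<Rightarrow> (complex \<Rightarrow> complex) \<Rightarrow> complex" where
  "P_integral k s R g = contour_integral (circlepath 0 R) (\<lambda>\<zeta>. g \<zeta> / poly (Ppoly k s) \<zeta>)"

lemma circlepath_avoids_roots:
  assumes "\<And>z. poly (Ppoly k s) z = 0 \<Longrightarrow> cmod z < R"
  shows "path_image (circlepath 0 R) \<subseteq> - {z. poly (Ppoly k s) z = 0}"
  using assms by (force simp: dist_norm)

lemma contour_integrable_div_Ppoly_power:
  assumes "g holomorphic_on UNIV" "\<And>z. poly (Ppoly k s) z = 0 \<Longrightarrow> cmod z < R"
  shows "(\<lambda>\<zeta>. g \<zeta> / poly (Ppoly k s) \<zeta> ^ n) contour_integrable_on (circlepath 0 R)"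
proof (rule contour_integrable_holomorphic_simple)
  show "(\<lambda>\<zeta>. g \<zeta> / poly (Ppoly k s) \<zeta> ^ n) holomorphic_on - {z. poly (Ppoly k s) z = 0}"
    by (intro holomorphic_intros holomorphic_on_subset[OF assms(1)]) auto
  show "open (- {z. poly (Ppoly k s) z = 0})"
    using poly_roots_finite[OF Ppoly_nonzero] finite_imp_closed by blast
qed (use circlepath_avoids_roots[OF assms(2)] in auto)

lemma P_integral_eq_residues:
  assumes "g holomorphic_on UNIV" "\<And>z. poly (Ppoly k s) z = 0 \<Longrightarrow> cmod z < R"
  shows "P_integral k s R g = 2 * pi * \<i> * (\<Sum>z\<in>{z. poly (Ppoly k s) z = 0}. residue (\<lambda>\<zeta>. g \<zeta> / poly (Ppoly k s) \<zeta>) z)"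
proof -
  let ?Z = "{z. poly (Ppoly k s) z = 0}"
  have "(\<lambda>\<zeta>. g \<zeta> / poly (Ppoly k s) \<zeta>) holomorphic_on UNIV - ?Z"
    by (intro holomorphic_intros holomorphic_on_subset[OF assms(1)]) auto
  then have "P_integral k s R g = 2 * pi * \<i> *
      (\<Sum>z\<in>?Z. winding_number (circlepath 0 R) z * residue (\<lambda>\<zeta>. g \<zeta> / poly (Ppoly k s) \<zeta>) z)"
    unfolding P_integral_def
    by (intro Residue_theorem[OF open_UNIV connected_UNIV poly_roots_finite[OF Ppoly_nonzero]])
       (use circlepath_avoids_roots[OF assms(2)] in auto)
  also have "(\<Sum>z\<in>?Z. winding_number (circlepath 0 R) z * residue (\<lambda>\<zeta>. g \<zeta> / poly (Ppoly k s) \<zeta>) z)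
      = (\<Sum>z\<in>?Z. residue (\<lambda>\<zeta>. g \<zeta> / poly (Ppoly k s) \<zeta>) z)"
    by (intro sum.cong refl) (simp add: winding_number_circlepath assms(2))
  finally show ?thesis .
qed

lemma P_integral_radius_indep:
  assumes "g holomorphic_on UNIV"
    and "\<And>z. poly (Ppoly k s) z = 0 \<Longrightarrow> cmod z < R1" "\<And>z. poly (Ppoly k s) z = 0 \<Longrightarrow> cmod z < R2"
  shows "P_integral k s R1 g = P_integral k s R2 g"
  using P_integral_eq_residues[OF assms(1,2)] P_integral_eq_residues[OF assms(1,3)] by simp

text \<open>The remainder term \<open>f W\<close> is entire, so its integral vanishes by Cauchy's theorem.\<close>

lemma mvec_P_integral:
  assumes f: "f holomorphic_on UNIV" and q: "q holomorphic_on UNIV" and W: "W holomorphic_on UNIV"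
    and rel: "\<And>\<zeta>. mvec k M (Evec \<zeta>) i = q \<zeta> * Evec \<zeta> i - poly (Ppoly k s) \<zeta> * W \<zeta>"
    and R: "\<And>z. poly (Ppoly k s) z = 0 \<Longrightarrow> cmod z < R"
  shows "mvec k M (\<lambda>l. P_integral k s R (\<lambda>\<zeta>. f \<zeta> * Evec \<zeta> l)) i = P_integral k s R (\<lambda>\<zeta>. f \<zeta> * q \<zeta> * Evec \<zeta> i)"
proof -
  let ?\<gamma> = "circlepath 0 R" and ?P = "\<lambda>\<zeta>. poly (Ppoly k s) \<zeta>"
  have int: "(\<lambda>\<zeta>. f \<zeta> * Evec \<zeta> l / ?P \<zeta>) contour_integrable_on ?\<gamma>" for l
    using contour_integrable_div_Ppoly_power[of "\<lambda>\<zeta>. f \<zeta> * Evec \<zeta> l" k s R 1] R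
    by (simp add: f Evec_def holomorphic_intros)
  have "mvec k M (\<lambda>l. P_integral k s R (\<lambda>\<zeta>. f \<zeta> * Evec \<zeta> l)) i
      = (\<Sum>l\<in>{1..k}. contour_integral ?\<gamma> (\<lambda>\<zeta>. M i l * (f \<zeta> * Evec \<zeta> l / ?P \<zeta>)))"
    unfolding mvec_def P_integral_def by (intro sum.cong refl contour_integral_lmul[OF int, symmetric])
  also have "\<dots> = contour_integral ?\<gamma> (\<lambda>\<zeta>. \<Sum>l\<in>{1..k}. M i l * (f \<zeta> * Evec \<zeta> l / ?P \<zeta>))"
  proof (rule contour_integral_sum[symmetric])
    fix l show "(\<lambda>\<zeta>. M i l * (f \<zeta> * Evec \<zeta> l / ?P \<zeta>)) contour_integrable_on ?\<gamma>"
      by (rule contour_integrable_lmul[OF int])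
  qed simp
  also have "\<dots> = contour_integral ?\<gamma> (\<lambda>\<zeta>. f \<zeta> * q \<zeta> * Evec \<zeta> i / ?P \<zeta> - f \<zeta> * W \<zeta>)"
  proof (rule contour_integral_eq)
    fix \<zeta> assume "\<zeta> \<in> path_image ?\<gamma>"
    then have "\<zeta> \<in> - {z. ?P z = 0}" using circlepath_avoids_roots[OF R] by blast
    then have "?P \<zeta> \<noteq> 0" by simp
    moreover have "(\<Sum>l\<in>{1..k}. M i l * (f \<zeta> * Evec \<zeta> l / ?P \<zeta>)) = f \<zeta> * mvec k M (Evec \<zeta>) i / ?P \<zeta>"
      by (simp add: mvec_def sum_distrib_left sum_divide_distrib mult_ac)
    ultimately show "(\<Sum>l\<in>{1..k}. M i l * (f \<zeta> * Evec \<zeta> l / ?P \<zeta>)) = f \<zeta> * q \<zeta> * Evec \<zeta> i / ?P \<zeta> - f \<zeta> * W \<zeta>"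
      by (simp add: rel field_simps)
  qed
  also have "\<dots> = contour_integral ?\<gamma> (\<lambda>\<zeta>. f \<zeta> * q \<zeta> * Evec \<zeta> i / ?P \<zeta>) - contour_integral ?\<gamma> (\<lambda>\<zeta>. f \<zeta> * W \<zeta>)"
  proof (rule contour_integral_diff)
    show "(\<lambda>\<zeta>. f \<zeta> * q \<zeta> * Evec \<zeta> i / ?P \<zeta>) contour_integrable_on ?\<gamma>"
      using contour_integrable_div_Ppoly_power[of "\<lambda>\<zeta>. f \<zeta> * q \<zeta> * Evec \<zeta> i" k s R 1] R
      by (simp add: f q Evec_def holomorphic_intros)
    show "(\<lambda>\<zeta>. f \<zeta> * W \<zeta>) contour_integrable_on ?\<gamma>"
      by (rule contour_integrable_holomorphic_simple[of _ UNIV]) (auto intro: holomorphic_intros f W)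
  qed
  also have "contour_integral ?\<gamma> (\<lambda>\<zeta>. f \<zeta> * W \<zeta>) = 0"
    by (rule contour_integral_unique, rule Cauchy_theorem_convex_simple[of _ UNIV])
       (auto intro: holomorphic_intros f W)
  finally show ?thesis unfolding P_integral_def by simp
qed

text \<open>\<open>\<Phi>\<^sub>f\<close> integrates \<open>f E / P\<^sub>s\<close> instead of \<open>f E P'\<^sub>s / P\<^sub>s\<close>, so that \<open>\<Psi>\<^sub>f = P'\<^sub>s(A(s)) \<Phi>\<^sub>f\<close>;
  it solves (@), and (1) follows from (3).\<close>

definition PhiF :: "nat \<Rightarrow> (complex \<Rightarrow> complex) \<Rightarrow> (nat \<Rightarrow> complex) \<Rightarrow> nat \<Rightarrow> complex" where
  "PhiF k f s i = P_integral k s (root_radius k s) (\<lambda>\<zeta>. f \<zeta> * Evec \<zeta> i) / (2 * pi * \<i>)"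

lemma PhiF_eq_P_integral:
  assumes "f holomorphic_on UNIV" "\<And>z. poly (Ppoly k s) z = 0 \<Longrightarrow> cmod z < R"
  shows "PhiF k f s i = P_integral k s R (\<lambda>\<zeta>. f \<zeta> * Evec \<zeta> i) / (2 * pi * \<i>)"
  unfolding PhiF_def using assms norm_root_less_root_radius
  by (subst P_integral_radius_indep[of _ k s _ R]) (auto intro!: holomorphic_intros simp: Evec_def)

lemma mvec_mpow_PhiF:
  assumes "f holomorphic_on UNIV" "i \<in> {1..k}"
  shows "mvec k (mpow k (Acomp k s) n) (PhiF k f s) i = PhiF k (\<lambda>\<zeta>. f \<zeta> * \<zeta>^n) s i"
proof -
  obtain W where W: "\<And>i. W i holomorphic_on UNIV"
    "\<And>z i. i \<in> {1..k} \<Longrightarrow> mvec k (mpoly k (Acomp k s) (monom 1 n)) (Evec z) i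
       = poly (monom 1 n) z * Evec z i - poly (Ppoly k s) z * W i z"
    using mpoly_Acomp_Evec[of k s "monom 1 n"] by blast
  have "mvec k (mpow k (Acomp k s) n) (Evec z) i = z^n * Evec z i - poly (Ppoly k s) z * W i z" for z
    using W(2)[OF assms(2), of z] by (simp add: mpow_eq_mpoly[abs_def] poly_monom)
  then have "mvec k (mpow k (Acomp k s) n) (\<lambda>l. P_integral k s (root_radius k s) (\<lambda>\<zeta>. f \<zeta> * Evec \<zeta> l)) i
      = P_integral k s (root_radius k s) (\<lambda>\<zeta>. f \<zeta> * \<zeta>^n * Evec \<zeta> i)"
    by (intro mvec_P_integral[OF assms(1) _ W(1)] norm_root_less_root_radius) (auto intro: holomorphic_intros)
  then show ?thesis unfolding PhiF_def mvec_divide_right by (simp add: mult_ac)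
qed

lemma PsiF_eq_mvec_PhiF:
  assumes "f holomorphic_on UNIV" "i \<in> {1..k}"
  shows "PsiF k f s i = mvec k (PderA k s) (PhiF k f s) i"
proof -
  obtain W where W: "\<And>i. W i holomorphic_on UNIV"
    "\<And>z i. i \<in> {1..k} \<Longrightarrow> mvec k (mpoly k (Acomp k s) (pderiv (Ppoly k s))) (Evec z) i
       = poly (pderiv (Ppoly k s)) z * Evec z i - poly (Ppoly k s) z * W i z"
    using mpoly_Acomp_Evec[of k s "pderiv (Ppoly k s)"] by blast
  have rel: "mvec k (PderA k s) (Evec z) i = Pder k s z * Evec z i - poly (Ppoly k s) z * W i z" for z
    using W(2)[OF assms(2), of z] by (simp add: PderA_eq_mpoly Pder_eq_poly_pderiv)
  have Pder: "Pder k s holomorphic_on UNIV"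
    unfolding Pder_eq_poly_pderiv[abs_def] by (intro holomorphic_intros)
  define R where "R = (SOME R. R > 0 \<and> (\<forall>z. poly (Ppoly k s) z = 0 \<longrightarrow> cmod z < R))"
  have "\<exists>R. R > 0 \<and> (\<forall>z. poly (Ppoly k s) z = 0 \<longrightarrow> cmod z < R)"
    using norm_root_less_root_radius[of k s] root_radius_ge_1[of k s]
    by (intro exI[of _ "root_radius k s"]) simp
  then have "R > 0 \<and> (\<forall>z. poly (Ppoly k s) z = 0 \<longrightarrow> cmod z < R)"
    unfolding R_def by (rule someI_ex)
  then have R: "\<And>z. poly (Ppoly k s) z = 0 \<Longrightarrow> cmod z < R" by blast
  have PhiF_eq: "PhiF k f s = (\<lambda>l. P_integral k s R (\<lambda>\<zeta>. f \<zeta> * Evec \<zeta> l) / (2 * pi * \<i>))"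
    using PhiF_eq_P_integral[OF assms(1) R] by blast
  have "PsiF k f s i = P_integral k s R (\<lambda>\<zeta>. f \<zeta> * Pder k s \<zeta> * Evec \<zeta> i) / (2 * pi * \<i>)"
    unfolding PsiF_def P_integral_def R_def[symmetric] Evec_def by (simp only: mult_ac)
  also have "\<dots> = mvec k (PderA k s) (\<lambda>l. P_integral k s R (\<lambda>\<zeta>. f \<zeta> * Evec \<zeta> l)) i / (2 * pi * \<i>)"
    using mvec_P_integral[OF assms(1) Pder W(1) rel R] by simp
  also have "\<dots> = mvec k (PderA k s) (PhiF k f s) i"
    unfolding PhiF_eq by (simp only: mvec_divide_right)
  finally show ?thesis .
qed

lemma has_field_derivative_P_integral_line:
  assumes g: "g holomorphic_on UNIV" and h: "h \<in> {1..k}"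
  shows "((\<lambda>t. P_integral k (s(h := t)) (root_radius k s + 1) g) has_field_derivative
      - ((-1)^h * contour_integral (circlepath 0 (root_radius k s + 1))
           (\<lambda>\<zeta>. g \<zeta> * \<zeta>^(k-h) / (poly (Ppoly k s) \<zeta>)^2))) (at (s h))"
proof -
  define R where "R = root_radius k s + 1"
  define c where "c \<zeta> = (-1)^h * \<zeta>^(k-h)" for \<zeta> :: complex
  define P where "P t \<zeta> = poly (Ppoly k s) \<zeta> + (t - s h) * c \<zeta>" for t \<zeta>
  define U where "U = ball (s h) 1"
  have P_eq: "P t \<zeta> = poly (Ppoly k (s(h := t))) \<zeta>" for t \<zeta>
    unfolding P_def c_def using poly_Ppoly_fun_upd[OF h] by simp
  have nz: "P t \<zeta> \<noteq> 0" if "t \<in> U" "\<zeta> \<in> sphere 0 R" for t \<zeta>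
    using that unfolding P_eq U_def R_def by (intro poly_Ppoly_fun_upd_nonzero[OF h]) auto
  have g': "continuous_on UNIV g" using g by (rule holomorphic_on_imp_continuous_on)
  have cont_P: "continuous_on (U \<times> sphere 0 R) (\<lambda>(t, \<zeta>). P t \<zeta>)"
    unfolding P_def c_def case_prod_unfold by (intro continuous_intros)
  have "((\<lambda>t. contour_integral (circlepath 0 R) (\<lambda>\<zeta>. g \<zeta> / P t \<zeta>)) has_field_derivative
      contour_integral (circlepath 0 R) (\<lambda>\<zeta>. - (g \<zeta> * c \<zeta>) / (P (s h) \<zeta>)^2)) (at (s h))"
  proof (rule has_field_derivative_contour_integral_circlepath)
    show "0 \<le> R" "open U" "convex U" "s h \<in> U" using root_radius_ge_1[of k s] by (auto simp: R_def U_def)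
    show "((\<lambda>t. g \<zeta> / P t \<zeta>) has_field_derivative - (g \<zeta> * c \<zeta>) / (P t \<zeta>)^2) (at t)"
      if "t \<in> U" "\<zeta> \<in> sphere 0 R" for t \<zeta>
      using nz[OF that] unfolding P_def by (auto intro!: derivative_eq_intros simp: power2_eq_square)
    show "continuous_on (U \<times> sphere 0 R) (\<lambda>(t, \<zeta>). g \<zeta> / P t \<zeta>)"
      using nz unfolding case_prod_unfold
      by (intro continuous_on_divide continuous_on_compose2[OF g' continuous_on_snd[OF continuous_on_id]]
          cont_P[unfolded case_prod_unfold]) auto
    show "continuous_on (U \<times> sphere 0 R) (\<lambda>(t, \<zeta>). - (g \<zeta> * c \<zeta>) / (P t \<zeta>)^2)"
      using nz unfolding case_prod_unfold c_def
      by (intro continuous_intros continuous_on_compose2[OF g' continuous_on_snd[OF continuous_on_id]]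
          cont_P[unfolded case_prod_unfold]) auto
  qed
  moreover have "(\<lambda>\<zeta>. g \<zeta> * \<zeta>^(k-h) / (poly (Ppoly k s) \<zeta>)^2) contour_integrable_on circlepath 0 R"
  proof (rule contour_integrable_div_Ppoly_power)
    show "(\<lambda>\<zeta>. g \<zeta> * \<zeta>^(k-h)) holomorphic_on UNIV" by (intro holomorphic_intros g)
    fix z assume "poly (Ppoly k s) z = 0"
    then have "cmod z < root_radius k s" by (rule norm_root_less_root_radius)
    then show "cmod z < R" unfolding R_def by simp
  qed
  from contour_integral_lmul[OF this, of "- ((-1)^h)"]
  have "contour_integral (circlepath 0 R) (\<lambda>\<zeta>. - (g \<zeta> * c \<zeta>) / (P (s h) \<zeta>)^2)
      = - ((-1)^h * contour_integral (circlepath 0 R) (\<lambda>\<zeta>. g \<zeta> * \<zeta>^(k-h) / (poly (Ppoly k s) \<zeta>)^2))"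
    by (simp add: P_def c_def mult_ac)
  ultimately show ?thesis unfolding P_integral_def P_eq R_def by simp
qed

lemma has_field_derivative_PhiF_line:
  assumes f: "f holomorphic_on UNIV" and h: "h \<in> {1..k}"
  shows "((\<lambda>t. PhiF k f (s(h := t)) i) has_field_derivative
      - ((-1)^h * contour_integral (circlepath 0 (root_radius k s + 1))
           (\<lambda>\<zeta>. f \<zeta> * Evec \<zeta> i * \<zeta>^(k-h) / (poly (Ppoly k s) \<zeta>)^2)) / (2 * pi * \<i>)) (at (s h))"
proof -
  define R where "R = root_radius k s + 1"
  have fE: "(\<lambda>\<zeta>. f \<zeta> * Evec \<zeta> i) holomorphic_on UNIV"
    unfolding Evec_def by (intro holomorphic_intros f)
  have "\<forall>\<^sub>F t in nhds (s h). t \<in> ball (s h) 1" by (rule eventually_nhds_in_open) auto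
  then have ev: "\<forall>\<^sub>F t in nhds (s h). t \<in> UNIV \<longrightarrow>
      PhiF k f (s(h := t)) i = P_integral k (s(h := t)) R (\<lambda>\<zeta>. f \<zeta> * Evec \<zeta> i) / (2 * pi * \<i>)"
  proof eventually_elim
    case (elim t)
    then have "root_radius k (s(h := t)) < R"
      unfolding R_def by (intro root_radius_fun_upd_less[OF h]) (auto simp: dist_norm norm_minus_commute)
    then show ?case
      using norm_root_less_root_radius by (intro impI PhiF_eq_P_integral[OF f]) (meson less_trans)
  qed
  show ?thesis unfolding R_def[symmetric]
    by (rule has_field_derivative_cong_ev[OF refl ev refl refl UNIV_I, THEN iffD2])
       (use DERIV_cdivide[OF has_field_derivative_P_integral_line[OF fE h]] in \<open>simp add: R_def mult_ac\<close>)
qed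

lemma continuous_on_PhiF:
  assumes f: "f holomorphic_on UNIV"
  shows "continuous_on UNIV (\<lambda>s. PhiF k f s i)"
proof (rule continuous_at_imp_continuous_on, intro ballI)
  fix s0 :: "nat \<Rightarrow> complex"
  define R where "R = root_radius k s0 + 1"
  define N where "N = {s. root_radius k s < R}"
  define g where "g \<zeta> = f \<zeta> * Evec \<zeta> i" for \<zeta>
  have N: "open N" "s0 \<in> N"
    unfolding N_def R_def by (auto intro!: open_Collect_less continuous_on_root_radius)
  have g: "continuous_on UNIV g" unfolding g_def Evec_def
    by (intro continuous_intros holomorphic_on_imp_continuous_on[OF f])
  have nz: "\<forall>p\<in>N \<times> sphere 0 R. poly (Ppoly k (fst p)) (snd p) \<noteq> 0"
  proof
    fix p :: "(nat \<Rightarrow> complex) \<times> complex" assume "p \<in> N \<times> sphere 0 R"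
    then show "poly (Ppoly k (fst p)) (snd p) \<noteq> 0"
      by (intro poly_Ppoly_nonzero_on_sphere[of k "fst p" R]) (auto simp: N_def)
  qed
  have "continuous_on (N \<times> sphere 0 R) (\<lambda>(s, \<zeta>). g \<zeta> / poly (Ppoly k s) \<zeta>)"
    unfolding case_prod_unfold
    by (intro continuous_on_divide continuous_on_compose2[OF g continuous_on_snd[OF continuous_on_id]]
        continuous_on_poly_Ppoly nz) auto
  then have "continuous_on N (\<lambda>s. P_integral k s R g / (2 * pi * \<i>))"
    unfolding P_integral_def using root_radius_ge_1[of k s0]
    by (intro continuous_intros continuous_on_contour_integral_circlepath) (auto simp: R_def)
  then have cont: "isCont (\<lambda>s. P_integral k s R g / (2 * pi * \<i>)) s0"
    using N continuous_on_eq_continuous_at by blast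
  have "\<forall>\<^sub>F s in nhds s0. PhiF k f s i = P_integral k s R g / (2 * pi * \<i>)"
    using eventually_nhds_in_open[OF N]
  proof eventually_elim
    case (elim s)
    then have "\<And>z. poly (Ppoly k s) z = 0 \<Longrightarrow> cmod z < R"
      using norm_root_less_root_radius[of k s] by (auto simp: N_def intro: less_trans)
    then show ?case unfolding g_def by (rule PhiF_eq_P_integral[OF f])
  qed
  from isCont_cong[OF this] show "isCont (\<lambda>s. PhiF k f s i) s0" using cont by simp
qed

lemma holo_k_PhiF:
  assumes "f holomorphic_on UNIV"
  shows "holo_k k U (\<lambda>s. PhiF k f s i)"
  unfolding holo_k_def field_differentiable_def
  using continuous_on_subset[OF continuous_on_PhiF[OF assms]] has_field_derivative_PhiF_line[OF assms]
  by blast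

lemma sol_A_PhiF:
  assumes f: "f holomorphic_on UNIV" and U: "admissible k U"
  shows "sol_A k U (PhiF k f)"
  unfolding sol_A_iff
proof (intro conjI ballI U holo_k_PhiF[OF f])
  fix s h i assume h: "h \<in> {1..k-1}" and i: "i \<in> {1..k}"
  let ?J = "contour_integral (circlepath 0 (root_radius k s + 1))
              (\<lambda>\<zeta>. f \<zeta> * Evec \<zeta> i * \<zeta>^(k-h) / (poly (Ppoly k s) \<zeta>)^2)"
  have fh: "(\<lambda>\<zeta>. f \<zeta> * \<zeta>^(k-h)) holomorphic_on UNIV" by (intro holomorphic_intros f)
  have "pdiff h (\<lambda>t. PhiF k f t i) s = - ((-1)^h * ?J) / (2 * pi * \<i>)"
    using h by (intro pdiff_eqI has_field_derivative_PhiF_line[OF f]) auto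
  moreover have "(\<lambda>t. mvec k (mpow k (Acomp k t) (k - h)) (PhiF k f t) i) = (\<lambda>t. PhiF k (\<lambda>\<zeta>. f \<zeta> * \<zeta>^(k-h)) t i)"
    using mvec_mpow_PhiF[OF f i] by (intro ext)
  moreover have "pdiff k (\<lambda>t. PhiF k (\<lambda>\<zeta>. f \<zeta> * \<zeta>^(k-h)) t i) s = - ((-1)^k * ?J) / (2 * pi * \<i>)"
  proof -
    have "k \<in> {1..k}" using h by auto
    from has_field_derivative_PhiF_line[OF fh this, of s i] show ?thesis
      by (intro pdiff_eqI) (simp add: mult_ac)
  qed
  ultimately show "defect k h (PhiF k f) s i = 0"
    unfolding defect_def by (simp add: power_add)
qed

lemma sol_AA_PsiF:
  assumes "f holomorphic_on UNIV" "admissible k U"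
  shows "sol_AA k U (PsiF k f)"
  using sol_AA_cong[OF sol_AA_PderA_mvec[OF sol_A_PhiF[OF assms]] PsiF_eq_mvec_PhiF[OF assms(1)]] .

theorem mainTheorem7:
  fixes k :: nat
  assumes "k \<ge> 2"
  shows "(\<forall>s \<in> Ck k - DiscSet k. minvertible k (PderA k s))
    \<and> (\<forall>f. f holomorphic_on UNIV \<longrightarrow> sol_AA k (Ck k - DiscSet k) (PsiF k f))
    \<and> (\<forall>U Psi. sol_AA k U Psi \<longrightarrow> sol_AA k U (\<lambda>s. mvec k (Acomp k s) (Psi s)))
    \<and> (\<forall>U Phi. sol_A k U Phi \<longrightarrow> sol_AA k U (\<lambda>s. mvec k (PderA k s) (Phi s)))
    \<and> (\<forall>Psi. sol_AA k (Ck k - DiscSet k) Psi \<longrightarrow>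
          sol_A k (Ck k - DiscSet k) (\<lambda>s. mvec k (minv k (PderA k s)) (Psi s)))"
proof -
  have k: "k \<ge> 1" using assms by simp
  show ?thesis
    using Ck_diff_DiscSet[OF k] sol_AA_PsiF[OF _ admissible_Ck_diff_DiscSet[OF k]]
      sol_AA_Acomp_mvec sol_AA_PderA_mvec sol_A_minv_PderA_mvec by blast
qed

end
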